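(* For every $n$, the congruence $\mathcal{H}(\{3412,2413\})_n$ on $S_n$ equals the meet $\mathcal{H}(\{231\})_n\wedge\mathcal{H}(\{312\})_n$ in the lattice of congruences of $S_n$.
   Context: $S_n$: permutations of $[n]$ in one-line notation with the right weak order (inclusion of sets of inverted value pairs), a lattice. Congruences of a lattice are ordered by refinement, and the meet of two congruences is their intersection as relations. Join-irreducibles of $S_n$ are the permutations with exactly one descent; $\gamma_*$ is the unique element covered by $\gamma$, and a congruence contracts $\gamma$ if $\gamma\equiv\gamma_*$. $u\times v=u_1\cdots u_p(p+v_1)\cdots(p+v_q)$; $\mathrm{st}(a_1..a_k)$ is the $u\in S_k$ with $u_i<u_j\iff a_i<a_j$. A family $\{\Theta_n\}_{n\ge0}$ of lattice congruences on $S_n$ is translational if $u\times v\equiv u'\times v'$ mod $\Theta_{p+q}$ iff $u\equiv u'$ mod $\Theta_p$ and $v\equiv v'$ mod $\Theta_q$; insertional if for every $p$-subset $Q\subseteq[p+q]$, with $\varphi_Q(u,v)$ the unique $x\in S_{p+q}$ with $\{x_1..x_p\}=Q$, $\mathrm{st}(x_1..x_p)=u$, $\mathrm{st}(x_{p+1}..x_{p+q})=v$, we have $u\equiv u',v\equiv v'\Rightarrow\varphi_Q(u,v)\equiv\varphi_Q(u',v')$; an $\mathcal{H}$-family if both. For a set $C$ of join-irreducible permutations, $\{\mathcal{H}(C)_n\}$ is the smallest $\mathcal{H}$-family contracting every element of $C$. *)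

theory Defs
  imports Main
begin

definition Sn :: "nat \<Rightarrow> nat list set" where
  "Sn n = {w. distinct w \<and> set w = {1..n}}"

definition invs :: "nat list \<Rightarrow> (nat \<times> nat) set" where
  "invs w = {(a,b). a < b \<and> (\<exists>i j. i < j \<and> j < length w \<and> w ! i = b \<and> w ! j = a)}"

definition weak_le :: "nat list \<Rightarrow> nat list \<Rightarrow> bool" where
  "weak_le w w' \<longleftrightarrow> invs w \<subseteq> invs w'"

definition weak_lt :: "nat list \<Rightarrow> nat list \<Rightarrow> bool" where
  "weak_lt w w' \<longleftrightarrow> invs w \<subset> invs w'"

definition is_wjoin :: "nat \<Rightarrow> nat list \<Rightarrow> nat list \<Rightarrow> nat list \<Rightarrow> bool" where
  "is_wjoin n x y z \<longleftrightarrow> z \<in> Sn n \<and> weak_le x z \<and> weak_le y z \<and>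
     (\<forall>w\<in>Sn n. weak_le x w \<and> weak_le y w \<longrightarrow> weak_le z w)"

definition is_wmeet :: "nat \<Rightarrow> nat list \<Rightarrow> nat list \<Rightarrow> nat list \<Rightarrow> bool" where
  "is_wmeet n x y z \<longleftrightarrow> z \<in> Sn n \<and> weak_le z x \<and> weak_le z y \<and>
     (\<forall>w\<in>Sn n. weak_le w x \<and> weak_le w y \<longrightarrow> weak_le w z)"

definition wjoin :: "nat \<Rightarrow> nat list \<Rightarrow> nat list \<Rightarrow> nat list" where
  "wjoin n x y = (THE z. is_wjoin n x y z)"

definition wmeet :: "nat \<Rightarrow> nat list \<Rightarrow> nat list \<Rightarrow> nat list" where
  "wmeet n x y = (THE z. is_wmeet n x y z)"

definition lattice_congruence :: "nat \<Rightarrow> (nat list \<times> nat list) set \<Rightarrow> bool" where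
  "lattice_congruence n \<Theta> \<longleftrightarrow> equiv (Sn n) \<Theta> \<and>
     (\<forall>x y z. (x, y) \<in> \<Theta> \<longrightarrow> z \<in> Sn n \<longrightarrow>
        (wjoin n x z, wjoin n y z) \<in> \<Theta> \<and> (wmeet n x z, wmeet n y z) \<in> \<Theta>)"

definition lower_star :: "nat list \<Rightarrow> nat list" where
  "lower_star \<gamma> = (THE w. w \<in> Sn (length \<gamma>) \<and> weak_lt w \<gamma> \<and>
      \<not> (\<exists>z\<in>Sn (length \<gamma>). weak_lt w z \<and> weak_lt z \<gamma>))"

definition cross :: "nat list \<Rightarrow> nat list \<Rightarrow> nat list" where
  "cross u v = u @ map (\<lambda>a. length u + a) v"

text \<open>phi_Q(u,v) in S_N (N = p+q): first p entries are the values in Q, pattern u;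
  the remaining entries are the values of [N]-Q, pattern v.\<close>
definition phi :: "nat \<Rightarrow> nat set \<Rightarrow> nat list \<Rightarrow> nat list \<Rightarrow> nat list" where
  "phi N Q u v =
     (let qs = sorted_list_of_set Q; rs = sorted_list_of_set ({1..N} - Q)
      in map (\<lambda>i. qs ! (i - 1)) u @ map (\<lambda>j. rs ! (j - 1)) v)"

definition translational :: "(nat \<Rightarrow> (nat list \<times> nat list) set) \<Rightarrow> bool" where
  "translational \<Theta> \<longleftrightarrow> (\<forall>p q u u' v v'.
      u \<in> Sn p \<longrightarrow> u' \<in> Sn p \<longrightarrow> v \<in> Sn q \<longrightarrow> v' \<in> Sn q \<longrightarrow>
      ((cross u v, cross u' v') \<in> \<Theta> (p + q) \<longleftrightarrow> (u, u') \<in> \<Theta> p \<and> (v, v') \<in> \<Theta> q))"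

definition insertional :: "(nat \<Rightarrow> (nat list \<times> nat list) set) \<Rightarrow> bool" where
  "insertional \<Theta> \<longleftrightarrow> (\<forall>p q Q u u' v v'.
      Q \<subseteq> {1..p + q} \<longrightarrow> card Q = p \<longrightarrow>
      u \<in> Sn p \<longrightarrow> u' \<in> Sn p \<longrightarrow> v \<in> Sn q \<longrightarrow> v' \<in> Sn q \<longrightarrow>
      (u, u') \<in> \<Theta> p \<longrightarrow> (v, v') \<in> \<Theta> q \<longrightarrow>
      (phi (p + q) Q u v, phi (p + q) Q u' v') \<in> \<Theta> (p + q))"

definition H_family :: "(nat \<Rightarrow> (nat list \<times> nat list) set) \<Rightarrow> bool" where
  "H_family \<Theta> \<longleftrightarrow> (\<forall>n. lattice_congruence n (\<Theta> n)) \<and> translational \<Theta> \<and> insertional \<Theta>"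

definition contracts :: "(nat \<Rightarrow> (nat list \<times> nat list) set) \<Rightarrow> nat list \<Rightarrow> bool" where
  "contracts \<Theta> \<gamma> \<longleftrightarrow> (\<gamma>, lower_star \<gamma>) \<in> \<Theta> (length \<gamma>)"

text \<open>H(C)_n: the smallest H-family contracting all of C, realised as the componentwise
  intersection of all such H-families.\<close>
definition Hcong :: "nat list set \<Rightarrow> nat \<Rightarrow> (nat list \<times> nat list) set" where
  "Hcong C n = \<Inter> {\<Theta> n | \<Theta>. H_family \<Theta> \<and> (\<forall>\<gamma>\<in>C. contracts \<Theta> \<gamma>)}"

end

theory Submission
  imports Defs
begin

text \<open>
  The sylvester congruence is recorded by the pairs \<open>(a, c)\<close> such that \<open>c\<close> precedes every value
  of \<open>[a, c)\<close>, the anti-sylvester congruence by the mirror-image pairs, and reverse-complement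
  maps one to the other. Both kernels are H-families, contracting 231 and 312 respectively, so
  H(231) \<inter> H(312) lies in their intersection. Conversely, 3412 and 2413 and their lower covers
  restrict to 231 and 213 on their first three letters and to 312 and 132 on their last three,
  so by insertion every H-family contracting 231 or 312 contracts 3412 and 2413.

  For the remaining inclusion, let an H-family contract 3412 and 2413. A descent \<open>c a\<close> with
  values of \<open>(a, c)\<close> both before and after it is contracted: the permutation is the join of
  its swap with a permutation below it that contains 3412 or 2413 around the descent. Such swaps
  preserve both kinds of pairs, and repeating them ends in a permutation without such descents,
  whose inversion set is the transitive closure of its sylvester and anti-sylvester pairs. Hence
  permutations with the same pairs of both kinds are congruent.
\<close>

section \<open>Positions in lists\<close>

fun precedes :: "'a list \<Rightarrow> 'a \<Rightarrow> 'a \<Rightarrow> bool" where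
  "precedes [] p q \<longleftrightarrow> False"
| "precedes (x # xs) p q \<longleftrightarrow> (p = x \<and> q \<in> set xs) \<or> precedes xs p q"

lemma precedes_iff_nth:
  "precedes w p q \<longleftrightarrow> (\<exists>i j. i < j \<and> j < length w \<and> w ! i = p \<and> w ! j = q)"
proof (induction w)
  case Nil
  then show ?case by simp
next
  case (Cons x xs)
  show ?case
  proof
    assume "precedes (x # xs) p q"
    then consider "p = x" "q \<in> set xs" | "precedes xs p q" by auto
    then show "\<exists>i j. i < j \<and> j < length (x # xs) \<and> (x # xs) ! i = p \<and> (x # xs) ! j = q"
    proof cases
      case 1
      then obtain j where "j < length xs" "xs ! j = q" by (metis in_set_conv_nth)
      with 1 show ?thesis by (intro exI[of _ 0] exI[of _ "Suc j"]) auto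
    next
      case 2
      then obtain i j where "i < j" "j < length xs" "xs ! i = p" "xs ! j = q" using Cons by auto
      then show ?thesis by (intro exI[of _ "Suc i"] exI[of _ "Suc j"]) auto
    qed
  next
    assume "\<exists>i j. i < j \<and> j < length (x # xs) \<and> (x # xs) ! i = p \<and> (x # xs) ! j = q"
    then obtain i j where ij: "i < j" "j < length (x # xs)" "(x # xs) ! i = p" "(x # xs) ! j = q"
      by blast
    then obtain j' where j': "j = Suc j'" by (cases j) auto
    show "precedes (x # xs) p q"
    proof (cases i)
      case 0
      with ij j' show ?thesis by auto
    next
      case (Suc i')
      with Cons ij j' show ?thesis by auto
    qed
  qed
qed

lemma precedes_setD: "precedes w p q \<Longrightarrow> p \<in> set w \<and> q \<in> set w"
  by (induction w) auto

lemma precedes_append: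
  "precedes (xs @ ys) p q \<longleftrightarrow> precedes xs p q \<or> precedes ys p q \<or> (p \<in> set xs \<and> q \<in> set ys)"
  by (induction xs) auto

lemma precedes_total: "p \<in> set w \<Longrightarrow> q \<in> set w \<Longrightarrow> p \<noteq> q \<Longrightarrow> precedes w p q \<or> precedes w q p"
  by (induction w) auto

lemma precedes_asym: "distinct w \<Longrightarrow> precedes w p q \<Longrightarrow> \<not> precedes w q p"
  by (induction w) (auto dest: precedes_setD)

lemma precedes_irrefl: "distinct w \<Longrightarrow> \<not> precedes w p p"
  by (induction w) auto

lemma precedes_trans: "distinct w \<Longrightarrow> precedes w p q \<Longrightarrow> precedes w q r \<Longrightarrow> precedes w p r"
  by (induction w) (auto dest: precedes_setD)

lemma precedes_rev: "precedes (rev w) p q \<longleftrightarrow> precedes w q p"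
  by (induction w) (auto simp: precedes_append)

lemma precedes_map: "precedes (map f w) s t \<longleftrightarrow> (\<exists>i j. f i = s \<and> f j = t \<and> precedes w i j)"
  by (induction w) (auto 0 4)

lemma precedes_map_inj_on:
  "inj_on f (set w) \<Longrightarrow> i \<in> set w \<Longrightarrow> j \<in> set w \<Longrightarrow>
    precedes (map f w) (f i) (f j) \<longleftrightarrow> precedes w i j"
proof
  assume "inj_on f (set w)" "i \<in> set w" "j \<in> set w" "precedes (map f w) (f i) (f j)"
  then show "precedes w i j"
    unfolding precedes_map by (metis inj_onD precedes_setD)
qed (auto simp: precedes_map)

lemma precedes_sorted:
  fixes w :: "'a::linorder list"
  shows "sorted_wrt (<) w \<Longrightarrow> precedes w p q \<longleftrightarrow> p \<in> set w \<and> q \<in> set w \<and> p < q"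
  by (induction w) auto

lemma precedes_split: "precedes w p q \<Longrightarrow> \<exists>T M U. w = T @ p # M @ q # U"
proof (induction w)
  case Nil
  then show ?case by simp
next
  case (Cons x xs)
  show ?case
  proof (cases "p = x \<and> q \<in> set xs")
    case True
    then obtain M U where "xs = M @ q # U" by (metis split_list)
    with True show ?thesis by (intro exI[of _ "[]"] exI[of _ M] exI[of _ U]) auto
  next
    case False
    with Cons obtain T M U where "xs = T @ p # M @ q # U" by auto
    then show ?thesis by (intro exI[of _ "x # T"] exI[of _ M] exI[of _ U]) auto
  qed
qed

lemma ex_first_in_list:
  "S \<noteq> {} \<Longrightarrow> S \<subseteq> set w \<Longrightarrow> \<exists>g\<in>S. \<forall>e\<in>S. e \<noteq> g \<longrightarrow> precedes w g e"
proof (induction w arbitrary: S)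
  case Nil
  then show ?case by simp
next
  case (Cons x xs)
  show ?case
  proof (cases "x \<in> S")
    case True
    with Cons.prems(2) show ?thesis by auto
  next
    case False
    with Cons.prems have "S \<subseteq> set xs" by auto
    with Cons.IH[OF Cons.prems(1)] show ?thesis by auto
  qed
qed

lemma list_eq_if_precedes_eq:
  assumes "distinct w" "distinct w'" "set w = set w'" "\<And>p q. precedes w p q \<longleftrightarrow> precedes w' p q"
  shows "w = w'"
  using assms
proof (induction w arbitrary: w')
  case Nil
  then show ?case by simp
next
  case (Cons x xs)
  then obtain y ys where w': "w' = y # ys" by (cases w') auto
  have "x = y"
  proof (rule ccontr)
    assume "x \<noteq> y"
    moreover have "y \<in> set (x # xs)" "x \<in> set (y # ys)"
      using Cons.prems(3) w' by (metis list.set_intros(1))+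
    ultimately have "y \<in> set xs" "x \<in> set ys" by auto
    then have "precedes (x # xs) x y" "precedes w' y x" using w' by simp_all
    then have "precedes w' x y" "precedes w' y x" using Cons.prems(4) by blast+
    then show False using precedes_asym[OF Cons.prems(2)] by blast
  qed
  have x: "x \<notin> set xs" "x \<notin> set ys" using Cons.prems(1,2) w' \<open>x = y\<close> by simp_all
  have "set xs = set ys"
    using Cons.prems(3) w' \<open>x = y\<close> x by (metis Diff_insert_absorb list.set(2))
  moreover have "precedes xs p q \<longleftrightarrow> precedes ys p q" for p q
  proof -
    have "precedes zs p q \<longleftrightarrow> precedes (x # zs) p q \<and> p \<noteq> x" if "x \<notin> set zs" for zs
      using that precedes_setD[of zs p q] by auto
    then show ?thesis using Cons.prems(4)[of p q] w' \<open>x = y\<close> x by metis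
  qed
  ultimately have "xs = ys" using Cons.IH[of ys] Cons.prems(1,2) w' by simp
  with w' \<open>x = y\<close> show ?case by simp
qed

lemma ex_least_wrt:
  assumes "finite S" "S \<noteq> {}"
    and trans: "\<And>p q r. p \<in> S \<Longrightarrow> q \<in> S \<Longrightarrow> r \<in> S \<Longrightarrow> R p q \<Longrightarrow> R q r \<Longrightarrow> R p r"
    and total: "\<And>p q. p \<in> S \<Longrightarrow> q \<in> S \<Longrightarrow> p \<noteq> q \<Longrightarrow> R p q \<or> R q p"
  shows "\<exists>g\<in>S. \<forall>e\<in>S. e \<noteq> g \<longrightarrow> R g e"
  using assms
proof (induction S rule: finite_ne_induct)
  case (singleton x)
  then show ?case by simp
next
  case (insert x F)
  then obtain g where g: "g \<in> F" "\<forall>e\<in>F. e \<noteq> g \<longrightarrow> R g e"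
    by (metis insertCI)
  show ?case
  proof (cases "R x g")
    case True
    have "R x e" if "e \<in> F" "e \<noteq> g" for e
      using insert.prems(1)[of x g e] True g that by blast
    with True show ?thesis by blast
  next
    case False
    moreover have "x \<noteq> g" using insert.hyps g(1) by blast
    ultimately have "R g x" using insert.prems(2)[of x g] g(1) by blast
    with g show ?thesis by blast
  qed
qed

lemma ex_list_of_strict_linear_order:
  assumes "finite S"
    and irrefl: "\<And>p. p \<in> S \<Longrightarrow> \<not> R p p"
    and trans: "\<And>p q r. p \<in> S \<Longrightarrow> q \<in> S \<Longrightarrow> r \<in> S \<Longrightarrow> R p q \<Longrightarrow> R q r \<Longrightarrow> R p r"
    and total: "\<And>p q. p \<in> S \<Longrightarrow> q \<in> S \<Longrightarrow> p \<noteq> q \<Longrightarrow> R p q \<or> R q p"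
  shows "\<exists>w. distinct w \<and> set w = S \<and> (\<forall>p\<in>S. \<forall>q\<in>S. precedes w p q \<longleftrightarrow> R p q)"
  using assms
proof (induction S rule: finite_psubset_induct)
  case (psubset S)
  show ?case
  proof (cases "S = {}")
    case True
    then show ?thesis by simp
  next
    case False
    then obtain g where g: "g \<in> S" "\<forall>e\<in>S. e \<noteq> g \<longrightarrow> R g e"
      using ex_least_wrt[of S R] psubset.hyps psubset.prems(2,3) by blast
    then obtain w where w: "distinct w" "set w = S - {g}"
        "\<forall>p\<in>S - {g}. \<forall>q\<in>S - {g}. precedes w p q \<longleftrightarrow> R p q"
      using psubset.IH[of "S - {g}"] psubset.prems by blast
    have "\<not> R p g" if "p \<in> S" for p
      using that g psubset.prems(1) psubset.prems(2)[of p g p] by (cases "p = g") auto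
    then have "precedes (g # w) p q \<longleftrightarrow> R p q" if "p \<in> S" "q \<in> S" for p q
      using that w g psubset.prems(1) precedes_setD[of w p q] by auto
    with w g show ?thesis by (intro exI[of _ "g # w"]) auto
  qed
qed

section \<open>Inversion sets and the weak order\<close>

lemma mem_invs: "(a, b) \<in> invs w \<longleftrightarrow> a < b \<and> precedes w b a"
  unfolding invs_def precedes_iff_nth by blast

lemma mem_invsD: "(a, b) \<in> invs w \<Longrightarrow> a \<in> set w \<and> b \<in> set w"
  by (auto simp: mem_invs dest: precedes_setD)

lemma Sn_distinct: "w \<in> Sn n \<Longrightarrow> distinct w"
  by (simp add: Sn_def)

lemma Sn_set: "w \<in> Sn n \<Longrightarrow> set w = {1..n}"
  by (simp add: Sn_def)

lemma Sn_length: "w \<in> Sn n \<Longrightarrow> length w = n"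
  using distinct_card[of w] by (simp add: Sn_def)

lemma rev_in_Sn: "x \<in> Sn n \<Longrightarrow> rev x \<in> Sn n"
  by (simp add: Sn_def)

definition value_pairs :: "nat \<Rightarrow> (nat \<times> nat) set" where
  "value_pairs n = {(a, b). 1 \<le> a \<and> a < b \<and> b \<le> n}"

lemma finite_value_pairs: "finite (value_pairs n)"
  by (rule finite_subset[of _ "{1..n} \<times> {1..n}"]) (auto simp: value_pairs_def)

lemma trans_value_pairs: "trans (value_pairs n)"
  unfolding trans_def value_pairs_def by auto

definition coclosed :: "(nat \<times> nat) set \<Rightarrow> bool" where
  "coclosed I \<longleftrightarrow> (\<forall>a b c. (a, c) \<in> I \<longrightarrow> a < b \<longrightarrow> b < c \<longrightarrow> (a, b) \<in> I \<or> (b, c) \<in> I)"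

lemma invs_subset_value_pairs: "w \<in> Sn n \<Longrightarrow> invs w \<subseteq> value_pairs n"
  by (auto simp: mem_invs value_pairs_def Sn_set dest!: precedes_setD)

lemma trans_invs: "distinct w \<Longrightarrow> trans (invs w)"
  unfolding trans_def mem_invs using precedes_trans by fastforce

lemma coclosed_invs:
  assumes w: "w \<in> Sn n"
  shows "coclosed (invs w)"
  unfolding coclosed_def mem_invs
proof (intro allI impI)
  fix a b c
  assume ac: "a < c \<and> precedes w c a" and "a < b" "b < c"
  have "a \<in> set w" "c \<in> set w" using ac precedes_setD by fast+
  with \<open>a < b\<close> \<open>b < c\<close> have "b \<in> set w" using Sn_set[OF w] by auto
  show "a < b \<and> precedes w b a \<or> b < c \<and> precedes w c b"
  proof (rule ccontr)
    assume "\<not> ?thesis"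
    then have "precedes w a b" "precedes w b c"
      using precedes_total \<open>a \<in> set w\<close> \<open>b \<in> set w\<close> \<open>c \<in> set w\<close> \<open>a < b\<close> \<open>b < c\<close>
      by (metis less_irrefl)+
    then have "precedes w a c" using precedes_trans[OF Sn_distinct[OF w]] by blast
    with ac show False using precedes_asym[OF Sn_distinct[OF w]] by blast
  qed
qed

lemma finite_invs: "w \<in> Sn n \<Longrightarrow> finite (invs w)"
  using finite_subset[OF invs_subset_value_pairs finite_value_pairs] .

lemma invs_inject:
  assumes w: "w \<in> Sn n" and w': "w' \<in> Sn n" and eq: "invs w = invs w'"
  shows "w = w'"
proof (rule list_eq_if_precedes_eq)
  show "distinct w" "distinct w'" "set w = set w'"
    using w w' by (simp_all add: Sn_def)
  have "precedes v p q \<longleftrightarrow> (if p < q then p \<in> set v \<and> q \<in> set v \<and> (p, q) \<notin> invs v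
      else p \<noteq> q \<and> (q, p) \<in> invs v)" if "distinct v" for v :: "nat list" and p q
    using that precedes_total[of p v q] precedes_asym[OF that] precedes_irrefl[OF that]
      precedes_setD[of v p q]
    by (cases "p = q") (auto simp: mem_invs)
  then show "precedes w p q \<longleftrightarrow> precedes w' p q" for p q
    using eq \<open>distinct w\<close> \<open>distinct w'\<close> \<open>set w = set w'\<close> by presburger
qed

lemma invs_rev:
  assumes x: "x \<in> Sn n"
  shows "invs (rev x) = value_pairs n - invs x"
proof -
  have "(a, b) \<in> invs (rev x) \<longleftrightarrow> (a, b) \<in> value_pairs n - invs x" for a b
    using precedes_total[of a x b] precedes_asym[OF Sn_distinct[OF x], of a b]
      precedes_setD[of x a b] Sn_set[OF x]
    by (auto simp: mem_invs precedes_rev value_pairs_def)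
  then show ?thesis by auto
qed

definition order_of_invs :: "(nat \<times> nat) set \<Rightarrow> nat \<Rightarrow> nat \<Rightarrow> bool" where
  "order_of_invs I p q \<longleftrightarrow> (p < q \<and> (p, q) \<notin> I) \<or> (q < p \<and> (q, p) \<in> I)"

lemma order_of_invs_trans:
  assumes tr: "trans I" and co: "coclosed I"
    and "order_of_invs I p q" "order_of_invs I q r"
  shows "order_of_invs I p r"
proof -
  have co': "(a, b) \<in> I \<or> (b, c) \<in> I" if "a < b" "b < c" "(a, c) \<in> I" for a b c
    using co that unfolding coclosed_def by blast
  have tr': "(a, c) \<in> I" if "(a, b) \<in> I" "(b, c) \<in> I" for a b c
    using tr that unfolding trans_def by blast
  show ?thesis
    using assms(3,4) unfolding order_of_invs_def
  proof (elim disjE conjE)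
    assume "p < q" "(p, q) \<notin> I" "q < r" "(q, r) \<notin> I"
    then show "p < r \<and> (p, r) \<notin> I \<or> r < p \<and> (r, p) \<in> I" using co'[of p q r] by auto
  next
    assume "p < q" "(p, q) \<notin> I" "r < q" "(r, q) \<in> I"
    then show "p < r \<and> (p, r) \<notin> I \<or> r < p \<and> (r, p) \<in> I"
      using tr'[of p r q] co'[of r p q] by (cases p r rule: linorder_cases) auto
  next
    assume "q < p" "(q, p) \<in> I" "q < r" "(q, r) \<notin> I"
    then show "p < r \<and> (p, r) \<notin> I \<or> r < p \<and> (r, p) \<in> I"
      using tr'[of q p r] co'[of q r p] by (cases p r rule: linorder_cases) auto
  next
    assume "q < p" "(q, p) \<in> I" "r < q" "(r, q) \<in> I"
    then show "p < r \<and> (p, r) \<notin> I \<or> r < p \<and> (r, p) \<in> I" using tr'[of r q p] by auto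
  qed
qed

lemma ex_perm_with_invs:
  assumes sub: "I \<subseteq> value_pairs n" and tr: "trans I" and co: "coclosed I"
  shows "\<exists>w\<in>Sn n. invs w = I"
proof -
  have "order_of_invs I p q \<or> order_of_invs I q p" if "p \<noteq> q" for p q
    using that unfolding order_of_invs_def by auto
  moreover have "\<not> order_of_invs I p p" for p
    unfolding order_of_invs_def by simp
  ultimately obtain w where w: "distinct w" "set w = {1..n}"
      "\<forall>p\<in>{1..n}. \<forall>q\<in>{1..n}. precedes w p q \<longleftrightarrow> order_of_invs I p q"
    using ex_list_of_strict_linear_order[of "{1..n}" "order_of_invs I"]
      order_of_invs_trans[OF tr co] by blast
  have "(a, b) \<in> invs w \<longleftrightarrow> (a, b) \<in> I" for a b
  proof
    assume "(a, b) \<in> invs w"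
    then have "a < b" "precedes w b a" by (simp_all add: mem_invs)
    with w show "(a, b) \<in> I" using precedes_setD[of w b a] unfolding order_of_invs_def by auto
  next
    assume "(a, b) \<in> I"
    with sub have "a < b" "a \<in> {1..n}" "b \<in> {1..n}" unfolding value_pairs_def by auto
    with w \<open>(a, b) \<in> I\<close> show "(a, b) \<in> invs w" unfolding order_of_invs_def by (auto simp: mem_invs)
  qed
  with w show ?thesis unfolding Sn_def by auto
qed

lemma trancl_less:
  fixes R :: "('a::order \<times> 'a) set"
  assumes "R \<subseteq> {(a, b). a < b}" "(a, b) \<in> R\<^sup>+"
  shows "a < b"
  using assms(2)
proof (induction rule: trancl_induct)
  case (step b c)
  with assms(1) show ?case by (blast intro: order.strict_trans)
qed (use assms(1) in blast)

lemma rtrancl_le: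
  fixes R :: "('a::order \<times> 'a) set"
  assumes "R \<subseteq> {(a, b). a < b}" "(a, b) \<in> R\<^sup>*"
  shows "a \<le> b"
  using assms(2)
proof (induction rule: rtrancl_induct)
  case (step b c)
  with assms(1) show ?case by (blast intro: order.strict_implies_order order.trans)
qed simp

lemma value_pairs_less: "value_pairs n \<subseteq> {(a, b). a < b}"
  by (auto simp: value_pairs_def)

lemma trancl_subset_of_trans: "R \<subseteq> T \<Longrightarrow> trans T \<Longrightarrow> R\<^sup>+ \<subseteq> T"
  by (metis trancl_id trancl_mono_subset)

lemma coclosed_trancl:
  assumes co: "coclosed R" and less: "R \<subseteq> {(a, b). a < b}"
  shows "coclosed (R\<^sup>+)"
proof -
  have "\<forall>b. a < b \<longrightarrow> b < c \<longrightarrow> (a, b) \<in> R\<^sup>+ \<or> (b, c) \<in> R\<^sup>+" if "(a, c) \<in> R\<^sup>+" for a c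
    using that
  proof (induction rule: trancl_induct)
    case (base c)
    then show ?case using co unfolding coclosed_def by blast
  next
    case (step d c)
    have "a < d" using trancl_less[OF less step.hyps(1)] .
    show ?case
    proof (intro allI impI)
      fix b
      assume b: "a < b" "b < c"
      consider "b < d" | "b = d" | "d < b" by linarith
      then show "(a, b) \<in> R\<^sup>+ \<or> (b, c) \<in> R\<^sup>+"
      proof cases
        case 1
        with step.IH b step.hyps(2) show ?thesis by (meson trancl_into_trancl)
      next
        case 2
        with step.hyps(1) show ?thesis by simp
      next
        case 3
        with co step.hyps(2) b have "(d, b) \<in> R \<or> (b, c) \<in> R" unfolding coclosed_def by blast
        with step.hyps(1) show ?thesis by (meson r_into_trancl trancl_into_trancl)
      qed
    qed
  qed
  then show ?thesis unfolding coclosed_def by blast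
qed

lemma wjoin_eq:
  assumes "is_wjoin n x z w"
  shows "wjoin n x z = w"
  unfolding wjoin_def
proof (rule the_equality)
  fix w'
  assume "is_wjoin n x z w'"
  with assms show "w' = w"
    unfolding is_wjoin_def weak_le_def by (meson invs_inject subset_antisym)
qed (fact assms)

lemma wmeet_eq:
  assumes "is_wmeet n x z w"
  shows "wmeet n x z = w"
  unfolding wmeet_def
proof (rule the_equality)
  fix w'
  assume "is_wmeet n x z w'"
  with assms show "w' = w"
    unfolding is_wmeet_def weak_le_def by (meson invs_inject subset_antisym)
qed (fact assms)

lemma coclosed_Un: "coclosed I \<Longrightarrow> coclosed J \<Longrightarrow> coclosed (I \<union> J)"
  unfolding coclosed_def by blast

lemma
  assumes x: "x \<in> Sn n" and z: "z \<in> Sn n"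
  shows is_wjoin_wjoin: "is_wjoin n x z (wjoin n x z)"
    and invs_wjoin: "invs (wjoin n x z) = (invs x \<union> invs z)\<^sup>+"
proof -
  let ?R = "invs x \<union> invs z"
  have sub: "?R \<subseteq> value_pairs n" using invs_subset_value_pairs x z by blast
  have "coclosed (?R\<^sup>+)"
    using coclosed_trancl coclosed_Un coclosed_invs x z sub value_pairs_less by blast
  moreover have "?R\<^sup>+ \<subseteq> value_pairs n"
    using trancl_subset_of_trans[OF sub trans_value_pairs] .
  ultimately obtain w where w: "w \<in> Sn n" "invs w = ?R\<^sup>+"
    using ex_perm_with_invs trans_trancl by blast
  have "is_wjoin n x z w"
    unfolding is_wjoin_def weak_le_def
  proof (intro conjI ballI impI)
    fix u
    assume "u \<in> Sn n" "invs x \<subseteq> invs u \<and> invs z \<subseteq> invs u"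
    then show "invs w \<subseteq> invs u"
      using w(2) trancl_subset_of_trans[of ?R] trans_invs[OF Sn_distinct] by auto
  qed (use w in auto)
  then show "is_wjoin n x z (wjoin n x z)" "invs (wjoin n x z) = ?R\<^sup>+"
    using wjoin_eq w(2) by auto
qed

text \<open>Reversal is an antiautomorphism of the weak order, so meets are reversed joins.\<close>
lemma
  assumes x: "x \<in> Sn n" and z: "z \<in> Sn n"
  shows is_wmeet_wmeet: "is_wmeet n x z (wmeet n x z)"
    and invs_wmeet:
      "invs (wmeet n x z) = value_pairs n - ((value_pairs n - invs x) \<union> (value_pairs n - invs z))\<^sup>+"
proof -
  let ?j = "wjoin n (rev x) (rev z)"
  have j: "is_wjoin n (rev x) (rev z) ?j"
    and invs_j: "invs ?j = (invs (rev x) \<union> invs (rev z))\<^sup>+"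
    using is_wjoin_wjoin[OF rev_in_Sn[OF x] rev_in_Sn[OF z]] invs_wjoin[OF rev_in_Sn[OF x] rev_in_Sn[OF z]]
    by blast+
  have flip: "weak_le (rev u) (rev v) \<longleftrightarrow> weak_le v u" if "u \<in> Sn n" "v \<in> Sn n" for u v
    using that invs_rev invs_subset_value_pairs unfolding weak_le_def by blast
  have "is_wmeet n x z (rev ?j)"
    unfolding is_wmeet_def
  proof (intro conjI ballI impI)
    have jS: "?j \<in> Sn n" using j unfolding is_wjoin_def by blast
    then show "rev ?j \<in> Sn n" by (rule rev_in_Sn)
    show "weak_le (rev ?j) x" "weak_le (rev ?j) z"
      using j flip[OF x rev_in_Sn[OF jS]] flip[OF z rev_in_Sn[OF jS]] x z
      unfolding is_wjoin_def by simp_all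
    fix w
    assume "w \<in> Sn n" "weak_le w x \<and> weak_le w z"
    then show "weak_le w (rev ?j)"
      using j flip[OF x rev_in_Sn] flip[OF z rev_in_Sn] flip[of "rev w" ?j] rev_in_Sn
      unfolding is_wjoin_def by (metis rev_rev_ident)
  qed
  then show "is_wmeet n x z (wmeet n x z)"
    and "invs (wmeet n x z) = value_pairs n - ((value_pairs n - invs x) \<union> (value_pairs n - invs z))\<^sup>+"
    using wmeet_eq invs_j invs_rev x z j unfolding is_wjoin_def by auto
qed

lemma wjoin_in_Sn: "x \<in> Sn n \<Longrightarrow> z \<in> Sn n \<Longrightarrow> wjoin n x z \<in> Sn n"
  using is_wjoin_wjoin unfolding is_wjoin_def by blast

lemma wmeet_in_Sn: "x \<in> Sn n \<Longrightarrow> z \<in> Sn n \<Longrightarrow> wmeet n x z \<in> Sn n"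
  using is_wmeet_wmeet unfolding is_wmeet_def by blast

section \<open>Reverse-complement\<close>

definition reverse_complement :: "nat \<Rightarrow> nat list \<Rightarrow> nat list" where
  "reverse_complement n w = rev (map (\<lambda>a. Suc n - a) w)"

lemma bij_betw_complement: "bij_betw (\<lambda>a. Suc n - a) {1..n} {1..n}"
  by (rule bij_betw_byWitness[where f' = "\<lambda>a. Suc n - a"]) auto

lemma reverse_complement_in_Sn:
  assumes "w \<in> Sn n"
  shows "reverse_complement n w \<in> Sn n"
  using assms bij_betw_complement[of n]
  unfolding reverse_complement_def Sn_def bij_betw_def
  by (auto simp: distinct_map inj_on_subset)

lemma reverse_complement_reverse_complement:
  assumes "w \<in> Sn n"
  shows "reverse_complement n (reverse_complement n w) = w"
proof -
  have "map (\<lambda>a. Suc n - (Suc n - a)) w = map id w"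
    using Sn_set[OF assms] by (intro map_cong) auto
  then show ?thesis unfolding reverse_complement_def by (simp add: rev_map comp_def)
qed

lemma mem_invs_reverse_complement:
  assumes w: "w \<in> Sn n"
  shows "(a, b) \<in> invs (reverse_complement n w) \<longleftrightarrow>
    1 \<le> a \<and> b \<le> n \<and> (Suc n - b, Suc n - a) \<in> invs w"
proof -
  have "(\<exists>i j. Suc n - i = a \<and> Suc n - j = b \<and> precedes w i j) \<longleftrightarrow>
      1 \<le> a \<and> b \<le> n \<and> precedes w (Suc n - a) (Suc n - b)" if "a < b"
  proof
    assume "\<exists>i j. Suc n - i = a \<and> Suc n - j = b \<and> precedes w i j"
    then obtain i j where ij: "Suc n - i = a" "Suc n - j = b" "precedes w i j" by blast
    with Sn_set[OF w] have "i \<in> {1..n}" "j \<in> {1..n}" by (auto dest: precedes_setD)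
    with ij show "1 \<le> a \<and> b \<le> n \<and> precedes w (Suc n - a) (Suc n - b)"
      by (auto simp: Suc_diff_le)
  next
    assume "1 \<le> a \<and> b \<le> n \<and> precedes w (Suc n - a) (Suc n - b)"
    with that show "\<exists>i j. Suc n - i = a \<and> Suc n - j = b \<and> precedes w i j"
      by (intro exI[of _ "Suc n - a"] exI[of _ "Suc n - b"]) auto
  qed
  then show ?thesis
    by (auto simp: reverse_complement_def mem_invs precedes_rev precedes_map)
qed

lemma weak_le_reverse_complement_mono:
  assumes "x \<in> Sn n" "y \<in> Sn n" "weak_le x y"
  shows "weak_le (reverse_complement n x) (reverse_complement n y)"
  using assms unfolding weak_le_def by (auto simp: mem_invs_reverse_complement)

lemma weak_le_reverse_complement_iff:
  assumes "x \<in> Sn n" "y \<in> Sn n"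
  shows "weak_le (reverse_complement n x) (reverse_complement n y) \<longleftrightarrow> weak_le x y"
  using assms weak_le_reverse_complement_mono[of "reverse_complement n x" n "reverse_complement n y"]
    weak_le_reverse_complement_mono[of x n y]
  by (auto simp: reverse_complement_in_Sn reverse_complement_reverse_complement)

lemma weak_le_reverse_complement_left:
  assumes "x \<in> Sn n" "w \<in> Sn n"
  shows "weak_le (reverse_complement n x) w \<longleftrightarrow> weak_le x (reverse_complement n w)"
  using weak_le_reverse_complement_iff[of x n "reverse_complement n w"] assms
  by (simp add: reverse_complement_in_Sn reverse_complement_reverse_complement)

lemma weak_le_reverse_complement_right:
  assumes "x \<in> Sn n" "w \<in> Sn n"
  shows "weak_le w (reverse_complement n x) \<longleftrightarrow> weak_le (reverse_complement n w) x"
  using weak_le_reverse_complement_iff[of "reverse_complement n w" n x] assms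
  by (simp add: reverse_complement_in_Sn reverse_complement_reverse_complement)

lemma is_wjoin_reverse_complement:
  assumes x: "x \<in> Sn n" and z: "z \<in> Sn n" and j: "is_wjoin n x z j"
  shows "is_wjoin n (reverse_complement n x) (reverse_complement n z) (reverse_complement n j)"
  unfolding is_wjoin_def
proof (intro conjI ballI impI)
  have "j \<in> Sn n" using j unfolding is_wjoin_def by blast
  then show "reverse_complement n j \<in> Sn n" by (rule reverse_complement_in_Sn)
  show "weak_le (reverse_complement n x) (reverse_complement n j)"
    "weak_le (reverse_complement n z) (reverse_complement n j)"
    using j x z weak_le_reverse_complement_mono unfolding is_wjoin_def by blast+
  fix w
  assume "w \<in> Sn n" "weak_le (reverse_complement n x) w \<and> weak_le (reverse_complement n z) w"
  with j x z show "weak_le (reverse_complement n j) w"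
    unfolding is_wjoin_def
    by (metis weak_le_reverse_complement_left reverse_complement_in_Sn)
qed

lemma is_wmeet_reverse_complement:
  assumes x: "x \<in> Sn n" and z: "z \<in> Sn n" and m: "is_wmeet n x z m"
  shows "is_wmeet n (reverse_complement n x) (reverse_complement n z) (reverse_complement n m)"
  unfolding is_wmeet_def
proof (intro conjI ballI impI)
  have "m \<in> Sn n" using m unfolding is_wmeet_def by blast
  then show "reverse_complement n m \<in> Sn n" by (rule reverse_complement_in_Sn)
  show "weak_le (reverse_complement n m) (reverse_complement n x)"
    "weak_le (reverse_complement n m) (reverse_complement n z)"
    using m x z weak_le_reverse_complement_mono unfolding is_wmeet_def by blast+
  fix w
  assume "w \<in> Sn n" "weak_le w (reverse_complement n x) \<and> weak_le w (reverse_complement n z)"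
  with m x z show "weak_le w (reverse_complement n m)"
    unfolding is_wmeet_def
    by (metis weak_le_reverse_complement_right reverse_complement_in_Sn)
qed

lemma wjoin_reverse_complement:
  "x \<in> Sn n \<Longrightarrow> z \<in> Sn n \<Longrightarrow>
    wjoin n (reverse_complement n x) (reverse_complement n z) = reverse_complement n (wjoin n x z)"
  by (intro wjoin_eq is_wjoin_reverse_complement is_wjoin_wjoin)

lemma wmeet_reverse_complement:
  "x \<in> Sn n \<Longrightarrow> z \<in> Sn n \<Longrightarrow>
    wmeet n (reverse_complement n x) (reverse_complement n z) = reverse_complement n (wmeet n x z)"
  by (intro wmeet_eq is_wmeet_reverse_complement is_wmeet_wmeet)

lemma reverse_complement_cross:
  assumes u: "u \<in> Sn p" and v: "v \<in> Sn q"
  shows "reverse_complement (p + q) (cross u v) = cross (reverse_complement q v) (reverse_complement p u)"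
proof -
  have "map (\<lambda>a. Suc (p + q) - a) u = map (\<lambda>a. q + (Suc p - a)) u"
    using Sn_set[OF u] by (intro map_cong) auto
  then show ?thesis
    using Sn_length[OF u] Sn_length[OF reverse_complement_in_Sn[OF v]]
    by (simp add: reverse_complement_def cross_def rev_map comp_def)
qed

lemma sorted_list_of_set_complement:
  assumes "S \<subseteq> {1..N}"
  shows "sorted_list_of_set ((\<lambda>a. Suc N - a) ` S) =
    rev (map (\<lambda>a. Suc N - a) (sorted_list_of_set S))"
proof -
  have fin: "finite S" using assms finite_subset by blast
  have inj: "inj_on (\<lambda>a. Suc N - a) S"
    using assms bij_betw_complement[of N] unfolding bij_betw_def by (blast intro: inj_on_subset)
  have "sorted_wrt (\<lambda>x y. Suc N - y < Suc N - x) (sorted_list_of_set S)"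
    by (rule sorted_wrt_mono_rel[OF _ strict_sorted_list_of_set]) (use assms fin in auto)
  then have "sorted_wrt (<) (rev (map (\<lambda>a. Suc N - a) (sorted_list_of_set S)))"
    by (simp add: sorted_wrt_rev sorted_wrt_map)
  with fin inj show ?thesis
    by (subst sorted_list_of_set_unique[symmetric]) (auto simp: card_image)
qed

lemma nth_rev_map_complement:
  "length xs = m \<Longrightarrow> b \<in> {1..m} \<Longrightarrow> rev (map f xs) ! (m - b) = f (xs ! (b - 1))"
  by (auto simp: rev_nth)

lemma reverse_complement_phi:
  assumes Q: "Q \<subseteq> {1..p + q}" "card Q = p" and u: "u \<in> Sn p" and v: "v \<in> Sn q"
  shows "reverse_complement (p + q) (phi (p + q) Q u v) =
    phi (p + q) ((\<lambda>a. Suc (p + q) - a) ` ({1..p + q} - Q))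
      (reverse_complement q v) (reverse_complement p u)"
proof -
  let ?c = "\<lambda>a. Suc (p + q) - a"
  let ?qs = "sorted_list_of_set Q" and ?rs = "sorted_list_of_set ({1..p + q} - Q)"
  have fin: "finite Q" using Q(1) finite_subset by blast
  have len: "length ?qs = p" "length ?rs = q"
    using Q fin by (simp_all add: card_Diff_subset)
  have "?c ` ({1..p + q} - Q) = {1..p + q} - ?c ` Q"
    using inj_on_image_set_diff[of ?c "{1..p + q}" "{1..p + q}" Q] bij_betw_complement[of "p + q"] Q(1)
    unfolding bij_betw_def by auto
  moreover have "?c ` Q \<subseteq> {1..p + q}"
    using Q(1) by fastforce
  ultimately have "{1..p + q} - ?c ` ({1..p + q} - Q) = ?c ` Q" by blast
  then have sl: "sorted_list_of_set (?c ` ({1..p + q} - Q)) = rev (map ?c ?rs)"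
    "sorted_list_of_set ({1..p + q} - ?c ` ({1..p + q} - Q)) = rev (map ?c ?qs)"
    using sorted_list_of_set_complement Q(1) by auto
  have "map (\<lambda>b. rev (map ?c ?rs) ! (q - b)) v = map (\<lambda>j. ?c (?rs ! (j - 1))) v"
    using nth_rev_map_complement[OF len(2), of _ ?c] Sn_set[OF v] by (intro map_cong) auto
  moreover have "map (\<lambda>a. rev (map ?c ?qs) ! (p - a)) u = map (\<lambda>i. ?c (?qs ! (i - 1))) u"
    using nth_rev_map_complement[OF len(1), of _ ?c] Sn_set[OF u] by (intro map_cong) auto
  ultimately show ?thesis
    unfolding phi_def Let_def sl by (simp add: reverse_complement_def rev_map comp_def)
qed

section \<open>Sylvester pairs\<close>

text \<open>For a permutation \<open>w\<close>, \<open>(a, c) \<in> syl_pairs (invs w)\<close> iff \<open>c\<close> precedes every value of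
  \<open>[a, c)\<close> in \<open>w\<close>, and \<open>(a, c) \<in> asyl_pairs (invs w)\<close> iff \<open>a\<close> follows every value of \<open>(a, c]\<close>.\<close>
definition syl_pairs :: "(nat \<times> nat) set \<Rightarrow> (nat \<times> nat) set" where
  "syl_pairs I = {(a, c). a < c \<and> (\<forall>b. a \<le> b \<and> b < c \<longrightarrow> (b, c) \<in> I)}"

definition asyl_pairs :: "(nat \<times> nat) set \<Rightarrow> (nat \<times> nat) set" where
  "asyl_pairs I = {(a, c). a < c \<and> (\<forall>b. a < b \<and> b \<le> c \<longrightarrow> (a, b) \<in> I)}"

lemma syl_pairs_mono: "I \<subseteq> J \<Longrightarrow> syl_pairs I \<subseteq> syl_pairs J"
  unfolding syl_pairs_def by blast

lemma asyl_pairs_mono: "I \<subseteq> J \<Longrightarrow> asyl_pairs I \<subseteq> asyl_pairs J"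
  unfolding asyl_pairs_def by blast

lemma syl_pairs_subset: "syl_pairs I \<subseteq> I"
  unfolding syl_pairs_def by auto

lemma asyl_pairs_subset: "asyl_pairs I \<subseteq> I"
  unfolding asyl_pairs_def by auto

text \<open>Let \<open>g\<close> be the value of \<open>[b, c]\<close> that comes first in \<open>x\<close>. If \<open>g \<noteq> b\<close>, then \<open>(b, g)\<close> is a
  sylvester pair of \<open>x\<close>; if \<open>g = b\<close>, the first step of a chain from \<open>b\<close> to \<open>c\<close> is not an inversion
  of \<open>x\<close>, so it lies in \<open>K\<close>. Either way induction on \<open>c - b\<close> completes the chain.\<close>
lemma in_trancl_syl_pairs_Un:
  assumes x: "x \<in> Sn n" and K: "K \<subseteq> value_pairs n"
  shows "b < c \<Longrightarrow> \<forall>b'. b \<le> b' \<and> b' < c \<longrightarrow> (b', c) \<in> (invs x \<union> K)\<^sup>+ \<Longrightarrow>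
    (b, c) \<in> (syl_pairs (invs x) \<union> K)\<^sup>+"
proof (induction "c - b" arbitrary: b rule: less_induct)
  case less
  let ?R = "invs x \<union> K" and ?R' = "syl_pairs (invs x) \<union> K"
  have R: "?R \<subseteq> value_pairs n" using invs_subset_value_pairs[OF x] K by blast
  then have R_less: "?R \<subseteq> {(a, b). a < b}" using value_pairs_less by blast
  have "(b, c) \<in> value_pairs n"
    using less.prems trancl_subset_of_trans[OF R trans_value_pairs] by blast
  then have "{b..c} \<subseteq> set x" using Sn_set[OF x] unfolding value_pairs_def by auto
  then obtain g where g: "g \<in> {b..c}" "\<forall>e\<in>{b..c}. e \<noteq> g \<longrightarrow> precedes x g e"
    using ex_first_in_list[of "{b..c}" x] less.prems(1) by fastforce
  have IH: "(e, c) \<in> ?R'\<^sup>+" if "b < e" "e < c" for e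
    using less.hyps[of e] less.prems that by auto
  show ?case
  proof (cases "g = b")
    case True
    obtain e where e: "(b, e) \<in> ?R" "(e, c) \<in> ?R\<^sup>*"
      using less.prems by (meson order_refl tranclD)
    have "b < e" "e \<le> c" using e R_less rtrancl_le[OF R_less e(2)] by auto
    have "(b, e) \<notin> invs x"
      using g True \<open>b < e\<close> \<open>e \<le> c\<close> precedes_asym[OF Sn_distinct[OF x]]
      by (auto simp: mem_invs)
    with e(1) have "(b, e) \<in> ?R'" by blast
    then show ?thesis
      using IH[of e] \<open>b < e\<close> \<open>e \<le> c\<close> by (cases "e = c") (auto intro: trancl_into_trancl2)
  next
    case False
    with g have "b < g" "g \<le> c" by auto
    with g have "(b, g) \<in> syl_pairs (invs x)"
      unfolding syl_pairs_def by (auto simp: mem_invs)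
    then have "(b, g) \<in> ?R'" by blast
    then show ?thesis
      using IH[of g] \<open>b < g\<close> \<open>g \<le> c\<close> by (cases "g = c") (auto intro: trancl_into_trancl2)
  qed
qed

lemma syl_pairs_trancl_Un:
  assumes x: "x \<in> Sn n" and K: "K \<subseteq> value_pairs n"
  shows "syl_pairs ((invs x \<union> K)\<^sup>+) = syl_pairs ((syl_pairs (invs x) \<union> K)\<^sup>+)"
proof
  show "syl_pairs ((syl_pairs (invs x) \<union> K)\<^sup>+) \<subseteq> syl_pairs ((invs x \<union> K)\<^sup>+)"
    by (intro syl_pairs_mono trancl_mono_subset) (use syl_pairs_subset in blast)
  show "syl_pairs ((invs x \<union> K)\<^sup>+) \<subseteq> syl_pairs ((syl_pairs (invs x) \<union> K)\<^sup>+)"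
    using in_trancl_syl_pairs_Un[OF x K] unfolding syl_pairs_def by auto
qed

lemma syl_pairs_wjoin:
  assumes "x \<in> Sn n" "z \<in> Sn n"
  shows "syl_pairs (invs (wjoin n x z)) = syl_pairs ((syl_pairs (invs x) \<union> invs z)\<^sup>+)"
  using syl_pairs_trancl_Un[OF assms(1) invs_subset_value_pairs[OF assms(2)]] invs_wjoin[OF assms] by simp

lemma syl_pairs_wmeet:
  assumes x: "x \<in> Sn n" and z: "z \<in> Sn n"
  shows "syl_pairs (invs (wmeet n x z)) = syl_pairs (invs x) \<inter> syl_pairs (invs z)"
proof
  let ?R = "(value_pairs n - invs x) \<union> (value_pairs n - invs z)"
  have m: "invs (wmeet n x z) = value_pairs n - ?R\<^sup>+" using invs_wmeet[OF x z] .
  have R_less: "?R \<subseteq> {(a, b). a < b}" using value_pairs_less by blast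
  show "syl_pairs (invs (wmeet n x z)) \<subseteq> syl_pairs (invs x) \<inter> syl_pairs (invs z)"
  proof -
    have "invs (wmeet n x z) \<subseteq> invs x" "invs (wmeet n x z) \<subseteq> invs z"
      using m invs_subset_value_pairs[OF x] invs_subset_value_pairs[OF z] by auto
    then show ?thesis using syl_pairs_mono by blast
  qed
  show "syl_pairs (invs x) \<inter> syl_pairs (invs z) \<subseteq> syl_pairs (invs (wmeet n x z))"
  proof
    fix p
    assume p: "p \<in> syl_pairs (invs x) \<inter> syl_pairs (invs z)"
    obtain a c where pac: "p = (a, c)" by (cases p)
    have ac: "a < c" "\<forall>b. a \<le> b \<and> b < c \<longrightarrow> (b, c) \<in> invs x \<and> (b, c) \<in> invs z"
      using p pac unfolding syl_pairs_def by auto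
    have "(b, c) \<notin> ?R\<^sup>+" if "a \<le> b" "b < c" for b
    proof
      assume "(b, c) \<in> ?R\<^sup>+"
      then obtain e where e: "(b, e) \<in> ?R\<^sup>*" "(e, c) \<in> ?R" by (meson tranclD2)
      with rtrancl_le[OF R_less e(1)] R_less ac that show False by auto
    qed
    then show "p \<in> syl_pairs (invs (wmeet n x z))"
      using ac invs_subset_value_pairs[OF x] pac m unfolding syl_pairs_def by auto
  qed
qed

section \<open>Permutations built from two blocks\<close>

text \<open>\<open>blocks u v\<close> writes the pattern \<open>u\<close> on the values \<open>\<alpha> ` {1..p}\<close> followed by the pattern
  \<open>v\<close> on the values \<open>\<beta> ` {1..q}\<close>; both \<^const>\<open>cross\<close> and \<^const>\<open>phi\<close> are of this form.\<close>
locale two_blocks =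
  fixes p q :: nat and \<alpha> \<beta> :: "nat \<Rightarrow> nat"
  assumes mono_left: "strict_mono_on {1..p} \<alpha>" and mono_right: "strict_mono_on {1..q} \<beta>"
    and disjoint: "\<alpha> ` {1..p} \<inter> \<beta> ` {1..q} = {}"
begin

definition blocks :: "nat list \<Rightarrow> nat list \<Rightarrow> nat list" where
  "blocks u v = map \<alpha> u @ map \<beta> v"

lemma set_blocks: "u \<in> Sn p \<Longrightarrow> v \<in> Sn q \<Longrightarrow> set (blocks u v) = \<alpha> ` {1..p} \<union> \<beta> ` {1..q}"
  unfolding blocks_def by (auto simp: Sn_set)

lemma distinct_blocks: "u \<in> Sn p \<Longrightarrow> v \<in> Sn q \<Longrightarrow> distinct (blocks u v)"
  unfolding blocks_def
  using disjoint strict_mono_on_imp_inj_on[OF mono_left] strict_mono_on_imp_inj_on[OF mono_right]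
  by (auto simp: Sn_set Sn_distinct distinct_map)

lemma blocks_in_Sn:
  "u \<in> Sn p \<Longrightarrow> v \<in> Sn q \<Longrightarrow> \<alpha> ` {1..p} \<union> \<beta> ` {1..q} = {1..N} \<Longrightarrow> blocks u v \<in> Sn N"
  using distinct_blocks set_blocks by (simp add: Sn_def)

lemma invs_blocks_left:
  assumes u: "u \<in> Sn p" and v: "v \<in> Sn q" and ik: "i \<in> {1..p}" "k \<in> {1..p}"
  shows "(\<alpha> i, \<alpha> k) \<in> invs (blocks u v) \<longleftrightarrow> (i, k) \<in> invs u"
proof -
  have "\<alpha> i \<notin> \<beta> ` set v" "\<alpha> k \<notin> \<beta> ` set v" using disjoint ik Sn_set[OF v] by blast+
  then have "precedes (blocks u v) (\<alpha> k) (\<alpha> i) \<longleftrightarrow> precedes (map \<alpha> u) (\<alpha> k) (\<alpha> i)"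
    unfolding blocks_def precedes_append by (auto dest: precedes_setD)
  also have "\<dots> \<longleftrightarrow> precedes u k i"
    using precedes_map_inj_on[of \<alpha> u k i] strict_mono_on_imp_inj_on[OF mono_left] Sn_set[OF u] ik
    by simp
  finally show ?thesis using strict_mono_on_less[OF mono_left ik] by (simp add: mem_invs)
qed

lemma invs_blocks_right:
  assumes u: "u \<in> Sn p" and v: "v \<in> Sn q" and ik: "i \<in> {1..q}" "k \<in> {1..q}"
  shows "(\<beta> i, \<beta> k) \<in> invs (blocks u v) \<longleftrightarrow> (i, k) \<in> invs v"
proof -
  have "\<beta> i \<notin> \<alpha> ` set u" "\<beta> k \<notin> \<alpha> ` set u" using disjoint ik Sn_set[OF u] by blast+
  then have "precedes (blocks u v) (\<beta> k) (\<beta> i) \<longleftrightarrow> precedes (map \<beta> v) (\<beta> k) (\<beta> i)"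
    unfolding blocks_def precedes_append by (auto dest: precedes_setD)
  also have "\<dots> \<longleftrightarrow> precedes v k i"
    using precedes_map_inj_on[of \<beta> v k i] strict_mono_on_imp_inj_on[OF mono_right] Sn_set[OF v] ik
    by simp
  finally show ?thesis using strict_mono_on_less[OF mono_right ik] by (simp add: mem_invs)
qed

lemma precedes_blocks_left_right:
  "u \<in> Sn p \<Longrightarrow> v \<in> Sn q \<Longrightarrow> i \<in> {1..p} \<Longrightarrow> k \<in> {1..q} \<Longrightarrow> precedes (blocks u v) (\<alpha> i) (\<beta> k)"
  unfolding blocks_def precedes_append by (auto simp: Sn_set)

lemma not_invs_blocks_left_right:
  assumes "u \<in> Sn p" "v \<in> Sn q" "i \<in> {1..p}" "k \<in> {1..q}"
  shows "(\<alpha> i, \<beta> k) \<notin> invs (blocks u v)"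
  using precedes_blocks_left_right[OF assms] precedes_asym[OF distinct_blocks[OF assms(1,2)]]
  by (simp add: mem_invs)

lemma invs_blocks_right_left:
  assumes "u \<in> Sn p" "v \<in> Sn q" "i \<in> {1..q}" "k \<in> {1..p}"
  shows "(\<beta> i, \<alpha> k) \<in> invs (blocks u v) \<longleftrightarrow> \<beta> i < \<alpha> k"
  using precedes_blocks_left_right[OF assms(1,2,4,3)] by (simp add: mem_invs)

lemma syl_pair_blocks_left:
  assumes u: "u \<in> Sn p" and v: "v \<in> Sn q"
    and st: "(s, \<alpha> k) \<in> syl_pairs (invs (blocks u v))" and ik: "i \<in> {1..p}" "k \<in> {1..p}"
    and s: "s \<le> \<alpha> i" "i < k"
  shows "(i, k) \<in> syl_pairs (invs u)"
  unfolding syl_pairs_def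
proof (intro CollectI case_prodI conjI allI impI)
  fix i'
  assume i': "i \<le> i' \<and> i' < k"
  with ik have "i' \<in> {1..p}" by auto
  with i' ik s have "s \<le> \<alpha> i'" "\<alpha> i' < \<alpha> k"
    using strict_mono_on_less_eq[OF mono_left] strict_mono_on_less[OF mono_left] by (blast intro: order.trans)+
  with st have "(\<alpha> i', \<alpha> k) \<in> invs (blocks u v)" unfolding syl_pairs_def by blast
  with u v \<open>i' \<in> {1..p}\<close> ik show "(i', k) \<in> invs u" using invs_blocks_left by blast
qed (fact s(2))

lemma syl_pair_blocks_right:
  assumes u: "u \<in> Sn p" and v: "v \<in> Sn q"
    and st: "(s, \<beta> k) \<in> syl_pairs (invs (blocks u v))" and ik: "i \<in> {1..q}" "k \<in> {1..q}"
    and s: "s \<le> \<beta> i" "i < k"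
  shows "(i, k) \<in> syl_pairs (invs v)"
  unfolding syl_pairs_def
proof (intro CollectI case_prodI conjI allI impI)
  fix i'
  assume i': "i \<le> i' \<and> i' < k"
  with ik have "i' \<in> {1..q}" by auto
  with i' ik s have "s \<le> \<beta> i'" "\<beta> i' < \<beta> k"
    using strict_mono_on_less_eq[OF mono_right] strict_mono_on_less[OF mono_right] by (blast intro: order.trans)+
  with st have "(\<beta> i', \<beta> k) \<in> invs (blocks u v)" unfolding syl_pairs_def by blast
  with u v \<open>i' \<in> {1..q}\<close> ik show "(i', k) \<in> invs v" using invs_blocks_right by blast
qed (fact s(2))

lemma syl_pairs_blocks_subset:
  assumes u: "u \<in> Sn p" "u' \<in> Sn p" and v: "v \<in> Sn q" "v' \<in> Sn q"
    and eq: "syl_pairs (invs u) = syl_pairs (invs u')" "syl_pairs (invs v) = syl_pairs (invs v')"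
  shows "syl_pairs (invs (blocks u v)) \<subseteq> syl_pairs (invs (blocks u' v'))"
proof (clarify)
  fix s t
  assume st: "(s, t) \<in> syl_pairs (invs (blocks u v))"
  have "(b, t) \<in> invs (blocks u' v')" if b: "s \<le> b" "b < t" for b
  proof -
    have bt: "(b, t) \<in> invs (blocks u v)" using st b unfolding syl_pairs_def by blast
    then have "b \<in> \<alpha> ` {1..p} \<union> \<beta> ` {1..q}" "t \<in> \<alpha> ` {1..p} \<union> \<beta> ` {1..q}"
      using mem_invsD set_blocks[OF u(1) v(1)] by blast+
    then consider
        (ll) i k where "i \<in> {1..p}" "k \<in> {1..p}" "b = \<alpha> i" "t = \<alpha> k"
      | (rl) i k where "i \<in> {1..q}" "k \<in> {1..p}" "b = \<beta> i" "t = \<alpha> k"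
      | (lr) i k where "i \<in> {1..p}" "k \<in> {1..q}" "b = \<alpha> i" "t = \<beta> k"
      | (rr) i k where "i \<in> {1..q}" "k \<in> {1..q}" "b = \<beta> i" "t = \<beta> k"
      by blast
    then show ?thesis
    proof cases
      case ll
      with b have "i < k" using strict_mono_on_less[OF mono_left] by auto
      with ll st b u v have "(i, k) \<in> syl_pairs (invs u)" using syl_pair_blocks_left by auto
      with ll eq(1) show ?thesis using invs_blocks_left[OF u(2) v(2)] syl_pairs_subset by blast
    next
      case rl
      with b show ?thesis using invs_blocks_right_left[OF u(2) v(2)] by simp
    next
      case lr
      with bt show ?thesis using not_invs_blocks_left_right[OF u(1) v(1)] by simp
    next
      case rr
      with b have "i < k" using strict_mono_on_less[OF mono_right] by auto
      with rr st b u v have "(i, k) \<in> syl_pairs (invs v)" using syl_pair_blocks_right by auto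
      with rr eq(2) show ?thesis using invs_blocks_right[OF u(2) v(2)] syl_pairs_subset by blast
    qed
  qed
  with st show "(s, t) \<in> syl_pairs (invs (blocks u' v'))" unfolding syl_pairs_def by blast
qed

lemma syl_pairs_blocks:
  assumes "u \<in> Sn p" "u' \<in> Sn p" "v \<in> Sn q" "v' \<in> Sn q"
    and "syl_pairs (invs u) = syl_pairs (invs u')" "syl_pairs (invs v) = syl_pairs (invs v')"
  shows "syl_pairs (invs (blocks u v)) = syl_pairs (invs (blocks u' v'))"
  using syl_pairs_blocks_subset[OF assms] syl_pairs_blocks_subset[OF assms(2,1,4,3) assms(5,6)[symmetric]]
  by blast

end

interpretation cross_blocks: two_blocks p q id "\<lambda>a. p + a"
  by unfold_locales (auto simp: strict_mono_on_def)

lemma cross_eq_blocks: "u \<in> Sn p \<Longrightarrow> cross u v = cross_blocks.blocks p u v"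
  unfolding cross_def cross_blocks.blocks_def by (simp add: Sn_length)

lemma cross_in_Sn:
  assumes "u \<in> Sn p" "v \<in> Sn q"
  shows "cross u v \<in> Sn (p + q)"
proof -
  have "id ` {1..p} \<union> (\<lambda>a. p + a) ` {1..q} = {1..p + q}"
    by (auto simp: image_iff intro!: bexI[of _ "_ - p"])
  then show ?thesis using cross_blocks.blocks_in_Sn[OF assms] cross_eq_blocks[OF assms(1)] by simp
qed

lemma syl_pairs_cross_left:
  assumes u: "u \<in> Sn p" and v: "v \<in> Sn q"
  shows "(i, k) \<in> syl_pairs (invs u) \<longleftrightarrow> (i, k) \<in> syl_pairs (invs (cross u v)) \<and> k \<le> p"
proof
  assume ik: "(i, k) \<in> syl_pairs (invs u)"
  then have "(i, k) \<in> value_pairs p" using syl_pairs_subset invs_subset_value_pairs[OF u] by blast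
  with ik show "(i, k) \<in> syl_pairs (invs (cross u v)) \<and> k \<le> p"
    using cross_blocks.invs_blocks_left[OF u v] cross_eq_blocks[OF u]
    unfolding syl_pairs_def value_pairs_def by auto
next
  assume ik: "(i, k) \<in> syl_pairs (invs (cross u v)) \<and> k \<le> p"
  then have "(i, k) \<in> value_pairs (p + q)"
    using syl_pairs_subset invs_subset_value_pairs[OF cross_in_Sn[OF u v]] by blast
  with ik show "(i, k) \<in> syl_pairs (invs u)"
    using cross_blocks.syl_pair_blocks_left[OF u v, of i k i] cross_eq_blocks[OF u]
    unfolding value_pairs_def by auto
qed

lemma syl_pairs_cross_right:
  assumes u: "u \<in> Sn p" and v: "v \<in> Sn q"
  shows "(i, k) \<in> syl_pairs (invs v) \<longleftrightarrow> (p + i, p + k) \<in> syl_pairs (invs (cross u v))"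
proof
  assume ik: "(i, k) \<in> syl_pairs (invs v)"
  then have "(i, k) \<in> value_pairs q" using syl_pairs_subset invs_subset_value_pairs[OF v] by blast
  have "(p + b, p + k) \<in> invs (cross u v)" if "i \<le> b" "b < k" for b
    using ik that \<open>(i, k) \<in> value_pairs q\<close> cross_blocks.invs_blocks_right[OF u v, of b k]
      cross_eq_blocks[OF u]
    unfolding syl_pairs_def value_pairs_def by auto
  then have "(b, p + k) \<in> invs (cross u v)" if "p + i \<le> b" "b < p + k" for b
    using that by (metis add_le_cancel_left add_less_cancel_left le_add_diff_inverse le_add1 order.trans)
  with ik show "(p + i, p + k) \<in> syl_pairs (invs (cross u v))"
    unfolding syl_pairs_def by auto
next
  assume ik: "(p + i, p + k) \<in> syl_pairs (invs (cross u v))"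
  then have pk: "(p + i, p + k) \<in> invs (cross u v)" using syl_pairs_subset by blast
  then have "(p + i, p + k) \<in> value_pairs (p + q)"
    using invs_subset_value_pairs[OF cross_in_Sn[OF u v]] by blast
  moreover have "i \<noteq> 0"
  proof
    assume "i = 0"
    with pk \<open>(p + i, p + k) \<in> value_pairs (p + q)\<close> show False
      using cross_blocks.not_invs_blocks_left_right[OF u v, of p k] cross_eq_blocks[OF u]
      unfolding value_pairs_def by auto
  qed
  ultimately show "(i, k) \<in> syl_pairs (invs v)"
    using ik cross_blocks.syl_pair_blocks_right[OF u v, of "p + i" k i] cross_eq_blocks[OF u]
    unfolding value_pairs_def by auto
qed

lemma image_nth_pred: "(\<lambda>i. xs ! (i - 1)) ` {1..length xs} = set xs"
proof (intro equalityI subsetI)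
  fix x
  assume "x \<in> set xs"
  then obtain i where "i < length xs" "xs ! i = x" by (auto simp: in_set_conv_nth)
  then show "x \<in> (\<lambda>i. xs ! (i - 1)) ` {1..length xs}" by (intro image_eqI[of _ _ "Suc i"]) auto
qed auto

lemma strict_mono_on_nth_pred:
  "sorted_wrt (<) xs \<Longrightarrow> strict_mono_on {1..length xs} (\<lambda>i. xs ! (i - 1))"
  by (auto simp: strict_mono_on_def sorted_wrt_iff_nth_less)

lemma phi_two_blocks:
  fixes p q :: nat and Q :: "nat set"
  defines "\<alpha> \<equiv> \<lambda>i. sorted_list_of_set Q ! (i - 1)"
    and "\<beta> \<equiv> \<lambda>j. sorted_list_of_set ({1..p + q} - Q) ! (j - 1)"
  assumes Q: "Q \<subseteq> {1..p + q}" "card Q = p"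
  shows "two_blocks p q \<alpha> \<beta>" and "\<alpha> ` {1..p} \<union> \<beta> ` {1..q} = {1..p + q}"
    and "phi (p + q) Q u v = two_blocks.blocks \<alpha> \<beta> u v"
proof -
  have fin: "finite Q" using Q(1) finite_subset by blast
  have len: "length (sorted_list_of_set Q) = p" "length (sorted_list_of_set ({1..p + q} - Q)) = q"
    using Q fin by (simp_all add: card_Diff_subset)
  have img: "\<alpha> ` {1..p} = Q" "\<beta> ` {1..q} = {1..p + q} - Q"
    unfolding \<alpha>_def \<beta>_def using image_nth_pred len fin by (metis set_sorted_list_of_set finite_atLeastAtMost finite_Diff)+
  show blocks: "two_blocks p q \<alpha> \<beta>"
    using strict_mono_on_nth_pred[OF strict_sorted_list_of_set, of Q]
      strict_mono_on_nth_pred[OF strict_sorted_list_of_set, of "{1..p + q} - Q"] img len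
    unfolding \<alpha>_def \<beta>_def by unfold_locales auto
  show "\<alpha> ` {1..p} \<union> \<beta> ` {1..q} = {1..p + q}" using img Q(1) by blast
  show "phi (p + q) Q u v = two_blocks.blocks \<alpha> \<beta> u v"
    by (subst two_blocks.blocks_def[OF blocks]) (simp add: phi_def Let_def \<alpha>_def \<beta>_def)
qed

lemma phi_in_Sn:
  assumes "Q \<subseteq> {1..p + q}" "card Q = p" "u \<in> Sn p" "v \<in> Sn q"
  shows "phi (p + q) Q u v \<in> Sn (p + q)"
  using two_blocks.blocks_in_Sn[OF phi_two_blocks(1)[OF assms(1,2)] assms(3,4) phi_two_blocks(2)[OF assms(1,2)]]
    phi_two_blocks(3)[OF assms(1,2)] by simp

section \<open>The sylvester and anti-sylvester families\<close>

definition sylvester :: "nat \<Rightarrow> (nat list \<times> nat list) set" where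
  "sylvester n = {(x, y). x \<in> Sn n \<and> y \<in> Sn n \<and> syl_pairs (invs x) = syl_pairs (invs y)}"

definition anti_sylvester :: "nat \<Rightarrow> (nat list \<times> nat list) set" where
  "anti_sylvester n = {(x, y). x \<in> Sn n \<and> y \<in> Sn n \<and> asyl_pairs (invs x) = asyl_pairs (invs y)}"

lemma equiv_kernel_on: "equiv A {(x, y). x \<in> A \<and> y \<in> A \<and> f x = f y}"
  unfolding equiv_def refl_on_def sym_def trans_def by auto

lemma lattice_congruence_sylvester: "lattice_congruence n (sylvester n)"
  unfolding lattice_congruence_def
proof (intro conjI allI impI)
  show "equiv (Sn n) (sylvester n)" unfolding sylvester_def by (rule equiv_kernel_on)
  fix x y z
  assume "(x, y) \<in> sylvester n" and z: "z \<in> Sn n"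
  then have x: "x \<in> Sn n" and y: "y \<in> Sn n" and eq: "syl_pairs (invs x) = syl_pairs (invs y)"
    unfolding sylvester_def by auto
  show "(wjoin n x z, wjoin n y z) \<in> sylvester n"
    using syl_pairs_wjoin[OF x z] syl_pairs_wjoin[OF y z] eq wjoin_in_Sn x y z
    unfolding sylvester_def by auto
  show "(wmeet n x z, wmeet n y z) \<in> sylvester n"
    using syl_pairs_wmeet[OF x z] syl_pairs_wmeet[OF y z] eq wmeet_in_Sn x y z
    unfolding sylvester_def by auto
qed

lemma translational_sylvester: "translational sylvester"
  unfolding translational_def
proof (intro allI impI)
  fix p q u u' v v'
  assume u: "u \<in> Sn p" and u': "u' \<in> Sn p" and v: "v \<in> Sn q" and v': "v' \<in> Sn q"
  have "syl_pairs (invs (cross u v)) = syl_pairs (invs (cross u' v')) \<longleftrightarrow>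
      syl_pairs (invs u) = syl_pairs (invs u') \<and> syl_pairs (invs v) = syl_pairs (invs v')"
  proof
    assume eq: "syl_pairs (invs (cross u v)) = syl_pairs (invs (cross u' v'))"
    show "syl_pairs (invs u) = syl_pairs (invs u') \<and> syl_pairs (invs v) = syl_pairs (invs v')"
      using syl_pairs_cross_left[OF u v] syl_pairs_cross_left[OF u' v']
        syl_pairs_cross_right[OF u v] syl_pairs_cross_right[OF u' v'] eq
      by (auto simp: set_eq_iff)
  next
    assume "syl_pairs (invs u) = syl_pairs (invs u') \<and> syl_pairs (invs v) = syl_pairs (invs v')"
    then show "syl_pairs (invs (cross u v)) = syl_pairs (invs (cross u' v'))"
      using cross_blocks.syl_pairs_blocks[OF u u' v v'] cross_eq_blocks[OF u] cross_eq_blocks[OF u']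
      by simp
  qed
  then show "(cross u v, cross u' v') \<in> sylvester (p + q) \<longleftrightarrow>
      (u, u') \<in> sylvester p \<and> (v, v') \<in> sylvester q"
    using cross_in_Sn u u' v v' unfolding sylvester_def by auto
qed

lemma insertional_sylvester: "insertional sylvester"
  unfolding insertional_def
proof (intro allI impI)
  fix p q Q u u' v v'
  assume Q: "Q \<subseteq> {1..p + q}" "card Q = p" and u: "u \<in> Sn p" "u' \<in> Sn p"
    and v: "v \<in> Sn q" "v' \<in> Sn q" and "(u, u') \<in> sylvester p" "(v, v') \<in> sylvester q"
  then have "syl_pairs (invs u) = syl_pairs (invs u')" "syl_pairs (invs v) = syl_pairs (invs v')"
    unfolding sylvester_def by auto
  then show "(phi (p + q) Q u v, phi (p + q) Q u' v') \<in> sylvester (p + q)"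
    using two_blocks.syl_pairs_blocks[OF phi_two_blocks(1)[OF Q] u v] phi_two_blocks(3)[OF Q]
      phi_in_Sn[OF Q] u v
    unfolding sylvester_def by auto
qed

lemma H_family_sylvester: "H_family sylvester"
  unfolding H_family_def
  using lattice_congruence_sylvester translational_sylvester insertional_sylvester by blast

definition reverse_complement_family ::
    "(nat \<Rightarrow> (nat list \<times> nat list) set) \<Rightarrow> nat \<Rightarrow> (nat list \<times> nat list) set" where
  "reverse_complement_family \<Theta> n = {(x, y). x \<in> Sn n \<and> y \<in> Sn n \<and>
     (reverse_complement n x, reverse_complement n y) \<in> \<Theta> n}"

lemma lattice_congruence_reverse_complement_family:
  assumes cong: "lattice_congruence n (\<Theta> n)"
  shows "lattice_congruence n (reverse_complement_family \<Theta> n)"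
  unfolding lattice_congruence_def
proof (intro conjI allI impI)
  have "equiv (Sn n) (\<Theta> n)" using cong unfolding lattice_congruence_def by blast
  then show "equiv (Sn n) (reverse_complement_family \<Theta> n)"
    using reverse_complement_in_Sn
    unfolding reverse_complement_family_def equiv_def refl_on_def sym_def trans_def by blast
  fix x y z
  assume "(x, y) \<in> reverse_complement_family \<Theta> n" and z: "z \<in> Sn n"
  then have x: "x \<in> Sn n" and y: "y \<in> Sn n"
    and xy: "(reverse_complement n x, reverse_complement n y) \<in> \<Theta> n"
    unfolding reverse_complement_family_def by auto
  have "(wjoin n (reverse_complement n x) (reverse_complement n z),
          wjoin n (reverse_complement n y) (reverse_complement n z)) \<in> \<Theta> n"
    "(wmeet n (reverse_complement n x) (reverse_complement n z),
          wmeet n (reverse_complement n y) (reverse_complement n z)) \<in> \<Theta> n"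
    using cong xy reverse_complement_in_Sn[OF z] unfolding lattice_congruence_def by blast+
  then show "(wjoin n x z, wjoin n y z) \<in> reverse_complement_family \<Theta> n"
    "(wmeet n x z, wmeet n y z) \<in> reverse_complement_family \<Theta> n"
    unfolding reverse_complement_family_def
    using x y z wjoin_in_Sn wmeet_in_Sn wjoin_reverse_complement wmeet_reverse_complement by auto
qed

lemma translational_reverse_complement_family:
  assumes "translational \<Theta>"
  shows "translational (reverse_complement_family \<Theta>)"
  unfolding translational_def
proof (intro allI impI)
  fix p q u u' v v'
  assume u: "u \<in> Sn p" "u' \<in> Sn p" and v: "v \<in> Sn q" "v' \<in> Sn q"
  have "(cross (reverse_complement q v) (reverse_complement p u),
         cross (reverse_complement q v') (reverse_complement p u')) \<in> \<Theta> (q + p) \<longleftrightarrow>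
      (reverse_complement q v, reverse_complement q v') \<in> \<Theta> q \<and>
      (reverse_complement p u, reverse_complement p u') \<in> \<Theta> p"
    using assms u v reverse_complement_in_Sn unfolding translational_def by blast
  then show "(cross u v, cross u' v') \<in> reverse_complement_family \<Theta> (p + q) \<longleftrightarrow>
      (u, u') \<in> reverse_complement_family \<Theta> p \<and> (v, v') \<in> reverse_complement_family \<Theta> q"
    using u v cross_in_Sn reverse_complement_cross
    unfolding reverse_complement_family_def by (auto simp: add.commute)
qed

lemma insertional_reverse_complement_family:
  assumes "insertional \<Theta>"
  shows "insertional (reverse_complement_family \<Theta>)"
  unfolding insertional_def
proof (intro allI impI)
  fix p q Q u u' v v'
  assume Q: "Q \<subseteq> {1..p + q}" "card Q = p" and u: "u \<in> Sn p" "u' \<in> Sn p"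
    and v: "v \<in> Sn q" "v' \<in> Sn q"
    and uu: "(u, u') \<in> reverse_complement_family \<Theta> p"
    and vv: "(v, v') \<in> reverse_complement_family \<Theta> q"
  let ?Q' = "(\<lambda>a. Suc (p + q) - a) ` ({1..p + q} - Q)"
  have "inj_on (\<lambda>a. Suc (p + q) - a) ({1..p + q} - Q)"
    using bij_betw_complement[of "p + q"] unfolding bij_betw_def by (blast intro: inj_on_subset)
  then have card: "card ?Q' = q"
    using Q finite_subset[OF Q(1)] by (simp add: card_image card_Diff_subset)
  have sub: "?Q' \<subseteq> {1..q + p}" by auto
  have rc: "(reverse_complement q v, reverse_complement q v') \<in> \<Theta> q"
    "(reverse_complement p u, reverse_complement p u') \<in> \<Theta> p"
    using uu vv unfolding reverse_complement_family_def by auto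
  have "(phi (q + p) ?Q' (reverse_complement q v) (reverse_complement p u),
         phi (q + p) ?Q' (reverse_complement q v') (reverse_complement p u')) \<in> \<Theta> (q + p)"
    using assms[unfolded insertional_def, rule_format, OF sub card _ _ _ _ rc]
      reverse_complement_in_Sn u v by blast
  then have "(reverse_complement (p + q) (phi (p + q) Q u v),
      reverse_complement (p + q) (phi (p + q) Q u' v')) \<in> \<Theta> (p + q)"
    using reverse_complement_phi[OF Q u(1) v(1)] reverse_complement_phi[OF Q u(2) v(2)]
    by (simp add: add.commute)
  then show "(phi (p + q) Q u v, phi (p + q) Q u' v') \<in> reverse_complement_family \<Theta> (p + q)"
    using phi_in_Sn[OF Q] u v unfolding reverse_complement_family_def by blast
qed

lemma H_family_reverse_complement_family:
  "H_family \<Theta> \<Longrightarrow> H_family (reverse_complement_family \<Theta>)"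
  unfolding H_family_def
  using lattice_congruence_reverse_complement_family translational_reverse_complement_family
    insertional_reverse_complement_family by blast

lemma asyl_pairs_reverse_complement:
  assumes x: "x \<in> Sn n"
  shows "asyl_pairs (invs x) =
    (\<lambda>(s, t). (Suc n - t, Suc n - s)) ` syl_pairs (invs (reverse_complement n x))"
proof (intro equalityI subsetI)
  fix p
  assume "p \<in> asyl_pairs (invs x)"
  then obtain a c where p: "p = (a, c)" and ac: "a < c" and
    right: "\<And>b. a < b \<Longrightarrow> b \<le> c \<Longrightarrow> (a, b) \<in> invs x"
    unfolding asyl_pairs_def by blast
  then have "(a, c) \<in> value_pairs n" using invs_subset_value_pairs[OF x] by blast
  then have range: "1 \<le> a" "c \<le> n" unfolding value_pairs_def by auto
  have "(b', Suc n - a) \<in> invs (reverse_complement n x)"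
    if "Suc n - c \<le> b'" "b' < Suc n - a" for b'
    using that range ac right[of "Suc n - b'"] by (auto simp: mem_invs_reverse_complement[OF x])
  with ac range have "(Suc n - c, Suc n - a) \<in> syl_pairs (invs (reverse_complement n x))"
    unfolding syl_pairs_def by auto
  moreover have "p = (\<lambda>(s, t). (Suc n - t, Suc n - s)) (Suc n - c, Suc n - a)"
    using p range ac by auto
  ultimately show "p \<in> (\<lambda>(s, t). (Suc n - t, Suc n - s)) ` syl_pairs (invs (reverse_complement n x))"
    by blast
next
  fix p
  assume "p \<in> (\<lambda>(s, t). (Suc n - t, Suc n - s)) ` syl_pairs (invs (reverse_complement n x))"
  then obtain s t where p: "p = (Suc n - t, Suc n - s)"
    and "(s, t) \<in> syl_pairs (invs (reverse_complement n x))" by auto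
  then have st: "s < t" and
    left: "\<And>b. s \<le> b \<Longrightarrow> b < t \<Longrightarrow> (b, t) \<in> invs (reverse_complement n x)"
    unfolding syl_pairs_def by auto
  then have "1 \<le> s" "t \<le> n" using mem_invs_reverse_complement[OF x, of s t] by auto
  have "(Suc n - t, b) \<in> invs x" if "Suc n - t < b" "b \<le> Suc n - s" for b
    using that left[of "Suc n - b"] \<open>1 \<le> s\<close> \<open>t \<le> n\<close> mem_invs_reverse_complement[OF x]
    by (auto simp: Suc_diff_le)
  with st \<open>t \<le> n\<close> show "p \<in> asyl_pairs (invs x)"
    unfolding p asyl_pairs_def by auto
qed

lemma anti_sylvester_eq: "anti_sylvester = reverse_complement_family sylvester"
proof (intro ext set_eqI)
  fix n and xy :: "nat list \<times> nat list"
  obtain x y where xy: "xy = (x, y)" by (cases xy)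
  let ?f = "\<lambda>(s, t). (Suc n - t, Suc n - s)"
  have inj: "inj_on ?f (value_pairs n)"
    by (auto simp: inj_on_def value_pairs_def)
  have "asyl_pairs (invs x) = asyl_pairs (invs y) \<longleftrightarrow>
      syl_pairs (invs (reverse_complement n x)) = syl_pairs (invs (reverse_complement n y))"
    if "x \<in> Sn n" "y \<in> Sn n"
  proof -
    have "syl_pairs (invs (reverse_complement n w)) \<subseteq> value_pairs n" if "w \<in> Sn n" for w
      using syl_pairs_subset invs_subset_value_pairs[OF reverse_complement_in_Sn[OF that]] by blast
    then show ?thesis
      using asyl_pairs_reverse_complement inj_on_image_eq_iff[OF inj] that by simp
  qed
  then show "xy \<in> anti_sylvester n \<longleftrightarrow> xy \<in> reverse_complement_family sylvester n"
    unfolding xy anti_sylvester_def reverse_complement_family_def sylvester_def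
    using reverse_complement_in_Sn by auto
qed

lemma H_family_anti_sylvester: "H_family anti_sylvester"
  unfolding anti_sylvester_eq by (rule H_family_reverse_complement_family[OF H_family_sylvester])

section \<open>Standardization and insertion\<close>

definition rank_in :: "nat set \<Rightarrow> nat \<Rightarrow> nat" where
  "rank_in S e = card {e' \<in> S. e' \<le> e}"

definition st :: "nat list \<Rightarrow> nat list" where
  "st w = map (rank_in (set w)) w"

lemma rank_in_less:
  assumes "finite S" "e' \<in> S" "e < e'"
  shows "rank_in S e < rank_in S e'"
  unfolding rank_in_def using assms
  by (intro psubset_card_mono) (auto simp: less_le_not_le)

lemma rank_in_less_iff: "finite S \<Longrightarrow> e \<in> S \<Longrightarrow> e' \<in> S \<Longrightarrow> rank_in S e < rank_in S e' \<longleftrightarrow> e < e'"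
  using rank_in_less by (metis linorder_neqE_nat order_less_asym)

lemma strict_mono_on_rank_in: "finite S \<Longrightarrow> strict_mono_on S (rank_in S)"
  using rank_in_less by (auto simp: strict_mono_on_def)

lemma rank_in_bounds:
  assumes "finite S" "e \<in> S"
  shows "1 \<le> rank_in S e" "rank_in S e \<le> card S"
  unfolding rank_in_def using assms
  by (auto simp: Suc_le_eq card_gt_0_iff intro: card_mono)

lemma length_st [simp]: "length (st w) = length w"
  by (simp add: st_def)

lemma st_in_Sn:
  assumes "distinct w"
  shows "st w \<in> Sn (length w)"
proof -
  have "distinct (st w)"
    using assms strict_mono_on_imp_inj_on[OF strict_mono_on_rank_in[of "set w"]]
    by (simp add: st_def distinct_map)
  moreover have "set (st w) \<subseteq> {1..length w}"
    using rank_in_bounds[of "set w"] distinct_card[OF assms] by (auto simp: st_def)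
  ultimately have "set (st w) = {1..length w}"
    using distinct_card[of "st w"] by (intro card_subset_eq) auto
  with \<open>distinct (st w)\<close> show ?thesis by (simp add: Sn_def)
qed

lemma rank_in_nth:
  assumes "distinct w" "i < length w"
  shows "rank_in (set w) (w ! i) = card {j. j < length w \<and> w ! j \<le> w ! i}"
proof -
  have "{e' \<in> set w. e' \<le> w ! i} = (\<lambda>j. w ! j) ` {j. j < length w \<and> w ! j \<le> w ! i}"
    by (auto simp: in_set_conv_nth)
  moreover have "inj_on (\<lambda>j. w ! j) {j. j < length w \<and> w ! j \<le> w ! i}"
    using assms by (auto simp: inj_on_def nth_eq_iff_index_eq)
  ultimately show ?thesis unfolding rank_in_def by (simp add: card_image)
qed

lemma rank_in_Sn:
  assumes "v \<in> Sn m" "e \<in> set v"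
  shows "rank_in (set v) e = e"
proof -
  have "{e' \<in> set v. e' \<le> e} = {1..e}" using assms by (auto simp: Sn_set)
  then show ?thesis unfolding rank_in_def by simp
qed

text \<open>Stated via comparison matrices so that the simplifier decides it on concrete lists.\<close>
definition same_pattern :: "nat list \<Rightarrow> nat list \<Rightarrow> bool" where
  "same_pattern w v \<longleftrightarrow> map (\<lambda>x. map ((<) x) w) w = map (\<lambda>x. map ((<) x) v) v"

lemma same_pattern_iff:
  "same_pattern w v \<longleftrightarrow> length w = length v \<and>
    (\<forall>i<length w. \<forall>j<length w. w ! i < w ! j \<longleftrightarrow> v ! i < v ! j)"
  unfolding same_pattern_def
  by (auto simp: list_eq_iff_nth_eq dest: map_eq_imp_length_eq)

lemma st_eqI:
  assumes w: "distinct w" and v: "v \<in> Sn (length w)" and pat: "same_pattern w v"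
  shows "st w = v"
proof (rule nth_equalityI)
  have len: "length w = length v" using pat same_pattern_iff by blast
  then show "length (st w) = length v" by simp
  fix i
  assume "i < length (st w)"
  then have i: "i < length w" by simp
  have "st w ! i = card {j. j < length w \<and> w ! j \<le> w ! i}"
    unfolding st_def using rank_in_nth[OF w i] i by simp
  also have "{j. j < length w \<and> w ! j \<le> w ! i} = {j. j < length v \<and> v ! j \<le> v ! i}"
    using pat i len unfolding same_pattern_iff by (auto simp: not_less[symmetric])
  also have "card \<dots> = v ! i"
    using rank_in_nth[OF Sn_distinct[OF v], of i] rank_in_Sn[OF v] i len by simp
  finally show "st w ! i = v ! i" .
qed

lemma same_pattern_st: "distinct w \<Longrightarrow> same_pattern w (st w)"
  unfolding same_pattern_iff st_def using rank_in_less_iff[of "set w"] by simp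

lemma st_eq_of_same_pattern:
  "distinct w \<Longrightarrow> distinct v \<Longrightarrow> length w = n \<Longrightarrow> set v = {1..n} \<Longrightarrow> same_pattern w v \<Longrightarrow>
    st w = v"
  by (rule st_eqI) (simp_all add: Sn_def)

lemma st_map_strict_mono:
  assumes w: "distinct w" and f: "strict_mono_on (set w) f"
  shows "st (map f w) = st w"
proof (rule st_eqI)
  show "distinct (map f w)"
    using w strict_mono_on_imp_inj_on[OF f] by (simp add: distinct_map)
  show "st w \<in> Sn (length (map f w))" using st_in_Sn[OF w] by simp
  show "same_pattern (map f w) (st w)"
    using same_pattern_st[OF w] strict_mono_on_less[OF f] unfolding same_pattern_iff by simp
qed

lemma sorted_list_of_set_nth_rank_in:
  assumes "finite S" "e \<in> S"
  shows "sorted_list_of_set S ! (rank_in S e - 1) = e"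
proof -
  let ?L = "sorted_list_of_set S"
  have L: "distinct ?L" "set ?L = S" "sorted_wrt (<) ?L" using assms(1) by auto
  obtain j where j: "j < length ?L" "?L ! j = e" using assms(2) L(2) by (metis in_set_conv_nth)
  have "{i. i < length ?L \<and> ?L ! i \<le> ?L ! j} = {0..j}"
  proof (intro equalityI subsetI)
    fix i
    assume "i \<in> {i. i < length ?L \<and> ?L ! i \<le> ?L ! j}"
    then show "i \<in> {0..j}"
      using sorted_wrt_nth_less[OF L(3), of j i] j(1) by (auto simp: not_le[symmetric])
  next
    fix i
    assume "i \<in> {0..j}"
    then show "i \<in> {i. i < length ?L \<and> ?L ! i \<le> ?L ! j}"
      using sorted_wrt_nth_less[OF L(3), of i j] j(1) by (cases "i = j") auto
  qed
  then have "rank_in S e = Suc j"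
    using rank_in_nth[OF L(1) j(1)] L(2) j(2) by simp
  with j(2) show ?thesis by simp
qed

lemma phi_st:
  assumes d: "distinct (xs @ ys)" and s: "set (xs @ ys) = {1..N}"
  shows "phi N (set xs) (st xs) (st ys) = xs @ ys"
proof -
  have "map (\<lambda>i. sorted_list_of_set (set zs) ! (i - 1)) (st zs) = zs" for zs
    unfolding st_def map_map by (rule map_idI) (use sorted_list_of_set_nth_rank_in[of "set zs"] in simp)
  moreover have "{1..N} - set xs = set ys" using d s by auto
  ultimately show ?thesis unfolding phi_def Let_def by simp
qed

lemma H_family_refl: "H_family \<Theta> \<Longrightarrow> u \<in> Sn p \<Longrightarrow> (u, u) \<in> \<Theta> p"
  unfolding H_family_def lattice_congruence_def equiv_def refl_on_def by blast

lemma H_family_prefix: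
  assumes H: "H_family \<Theta>" and d: "distinct (xs @ ys)" "distinct xs'"
    and s: "set (xs @ ys) = {1..N}" "set xs' = set xs"
    and \<Theta>: "(st xs, st xs') \<in> \<Theta> (length xs)"
  shows "(xs @ ys, xs' @ ys) \<in> \<Theta> N"
proof -
  have dxs: "distinct xs" "distinct ys" using d(1) by auto
  have N: "N = length xs + length ys"
    using distinct_card[OF d(1)] s(1) by simp
  have "length xs' = length xs"
    using distinct_card[OF d(2)] distinct_card[OF dxs(1)] s(2) by simp
  then have u: "st xs \<in> Sn (length xs)" "st xs' \<in> Sn (length xs)" and v: "st ys \<in> Sn (length ys)"
    using st_in_Sn[OF dxs(1)] st_in_Sn[OF d(2)] st_in_Sn[OF dxs(2)] by simp_all
  have Q: "set xs \<subseteq> {1..length xs + length ys}" "card (set xs) = length xs"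
    using s(1) N distinct_card[OF dxs(1)] by auto
  have "(phi N (set xs) (st xs) (st ys), phi N (set xs) (st xs') (st ys)) \<in> \<Theta> N"
    using H[unfolded H_family_def insertional_def, THEN conjunct2, THEN conjunct2, rule_format,
        OF Q u v v \<Theta> H_family_refl[OF H v]] N by simp
  moreover have "phi N (set xs') (st xs') (st ys) = xs' @ ys"
    using d s by (intro phi_st) auto
  ultimately show ?thesis using phi_st[OF d(1) s(1)] s(2) by simp
qed

lemma H_family_suffix:
  assumes H: "H_family \<Theta>" and d: "distinct (xs @ ys)" "distinct ys'"
    and s: "set (xs @ ys) = {1..N}" "set ys' = set ys"
    and \<Theta>: "(st ys, st ys') \<in> \<Theta> (length ys)"
  shows "(xs @ ys, xs @ ys') \<in> \<Theta> N"
proof -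
  have dxs: "distinct xs" "distinct ys" using d(1) by auto
  have N: "N = length xs + length ys"
    using distinct_card[OF d(1)] s(1) by simp
  have "length ys' = length ys"
    using distinct_card[OF d(2)] distinct_card[OF dxs(2)] s(2) by simp
  then have u: "st xs \<in> Sn (length xs)" and v: "st ys \<in> Sn (length ys)" "st ys' \<in> Sn (length ys)"
    using st_in_Sn[OF dxs(1)] st_in_Sn[OF dxs(2)] st_in_Sn[OF d(2)] by simp_all
  have Q: "set xs \<subseteq> {1..length xs + length ys}" "card (set xs) = length xs"
    using s(1) N distinct_card[OF dxs(1)] by auto
  have "(phi N (set xs) (st xs) (st ys), phi N (set xs) (st xs) (st ys')) \<in> \<Theta> N"
    using H[unfolded H_family_def insertional_def, THEN conjunct2, THEN conjunct2, rule_format,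
        OF Q u u v H_family_refl[OF H u] \<Theta>] N by simp
  moreover have "phi N (set xs) (st xs) (st ys') = xs @ ys'"
    using d s by (intro phi_st) auto
  ultimately show ?thesis using phi_st[OF d(1) s(1)] by simp
qed

lemma H_family_infix:
  assumes H: "H_family \<Theta>" and d: "distinct (xs @ zs @ ys)" "distinct zs'"
    and s: "set (xs @ zs @ ys) = {1..N}" "set zs' = set zs"
    and \<Theta>: "(st zs, st zs') \<in> \<Theta> (length zs)"
  shows "(xs @ zs @ ys, xs @ zs' @ ys) \<in> \<Theta> N"
proof -
  let ?r = "rank_in (set (zs @ ys))"
  have mono: "strict_mono_on (set (zs @ ys)) ?r" by (rule strict_mono_on_rank_in) simp
  have "distinct (zs @ ys)" "distinct (zs' @ ys)" using d s(2) by auto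
  then have Sn: "st (zs @ ys) \<in> Sn (length (zs @ ys))" "st (zs' @ ys) \<in> Sn (length (zs' @ ys))"
    using st_in_Sn by blast+
  have st: "st (zs @ ys) = map ?r zs @ map ?r ys" "st (zs' @ ys) = map ?r zs' @ map ?r ys"
    using s(2) by (simp_all add: st_def)
  have "strict_mono_on (set zs) ?r" using monotone_on_subset[OF mono] by simp
  then have "st (map ?r zs) = st zs" "st (map ?r zs') = st zs'"
    using d s(2) by (auto intro!: st_map_strict_mono)
  then have "(map ?r zs @ map ?r ys, map ?r zs' @ map ?r ys) \<in> \<Theta> (length (zs @ ys))"
    using H_family_prefix[OF H, of "map ?r zs" "map ?r ys" "map ?r zs'"] Sn st d s(2) \<Theta>
      strict_mono_on_imp_inj_on[OF mono]
    by (auto simp: Sn_def distinct_map inj_on_subset)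
  with st have "(st (zs @ ys), st (zs' @ ys)) \<in> \<Theta> (length (zs @ ys))" by simp
  then show ?thesis using H_family_suffix[OF H, of xs "zs @ ys" "zs' @ ys"] d s by auto
qed

lemma H_family_contracts_infix:
  assumes H: "H_family \<Theta>" and \<gamma>: "contracts \<Theta> \<gamma>" "st zs = \<gamma>" "st zs' = lower_star \<gamma>"
    and d: "distinct (xs @ zs @ ys)" "distinct zs'"
    and s: "set (xs @ zs @ ys) = {1..N}" "set zs' = set zs"
  shows "(xs @ zs @ ys, xs @ zs' @ ys) \<in> \<Theta> N"
  using H_family_infix[OF H d s] \<gamma> length_st[of zs] unfolding contracts_def by simp

section \<open>Small patterns\<close>

fun inversion_list :: "nat list \<Rightarrow> (nat \<times> nat) list" where
  "inversion_list [] = []"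
| "inversion_list (x # xs) = map (\<lambda>y. (y, x)) (filter (\<lambda>y. y < x) xs) @ inversion_list xs"

lemma invs_eq_set_inversion_list: "invs w = set (inversion_list w)"
proof (induction w)
  case Nil
  then show ?case by (auto simp: mem_invs)
next
  case (Cons x xs)
  have "(a, b) \<in> invs (x # xs) \<longleftrightarrow> (b = x \<and> a \<in> set xs \<and> a < x) \<or> (a, b) \<in> invs xs" for a b
    by (auto simp: mem_invs)
  with Cons show ?case by auto
qed

lemma lower_star_eqI:
  assumes \<gamma>: "\<gamma> \<in> Sn m" and w: "w \<in> Sn m"
    and cover: "invs \<gamma> = insert e (invs w)" "e \<notin> invs w"
    and below: "\<And>w'. w' \<in> Sn m \<Longrightarrow> invs w' \<subset> invs \<gamma> \<Longrightarrow> e \<notin> invs w'"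
  shows "lower_star \<gamma> = w"
proof -
  have len: "length \<gamma> = m" using Sn_length[OF \<gamma>] .
  have no_between: "\<not> (\<exists>z\<in>Sn m. weak_lt w z \<and> weak_lt z \<gamma>)"
  proof
    assume "\<exists>z\<in>Sn m. weak_lt w z \<and> weak_lt z \<gamma>"
    then obtain z where z: "invs w \<subset> invs z" "invs z \<subset> invs \<gamma>" unfolding weak_lt_def by blast
    then obtain y where y: "y \<in> invs z" "y \<notin> invs w" by blast
    then have "y = e" using z(2) cover by blast
    then have "e \<in> invs z" using y by simp
    then have "invs \<gamma> \<subseteq> invs z" using z(1) cover by auto
    then show False using z(2) by auto
  qed
  have P: "w \<in> Sn (length \<gamma>) \<and> weak_lt w \<gamma> \<and> \<not> (\<exists>z\<in>Sn (length \<gamma>). weak_lt w z \<and> weak_lt z \<gamma>)"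
    using w cover no_between len unfolding weak_lt_def by auto
  show ?thesis
    unfolding lower_star_def
  proof (rule the_equality)
    fix w'
    assume P': "w' \<in> Sn (length \<gamma>) \<and> weak_lt w' \<gamma> \<and> \<not> (\<exists>z\<in>Sn (length \<gamma>). weak_lt w' z \<and> weak_lt z \<gamma>)"
    then have w': "w' \<in> Sn m" "invs w' \<subset> invs \<gamma>" using len unfolding weak_lt_def by auto
    then have "e \<notin> invs w'" using below by blast
    then have sub: "invs w' \<subseteq> invs w" using w'(2) cover by auto
    have "invs w' = invs w"
    proof (rule ccontr)
      assume "invs w' \<noteq> invs w"
      then have "weak_lt w' w" using sub unfolding weak_lt_def by blast
      with P P' w len show False by blast
    qed
    then show "w' = w" using invs_inject[OF w'(1) w] by blast
  qed (fact P)
qed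

lemma coclosed_invsD:
  "w \<in> Sn n \<Longrightarrow> (a, c) \<in> invs w \<Longrightarrow> a < b \<Longrightarrow> b < c \<Longrightarrow> (a, b) \<in> invs w \<or> (b, c) \<in> invs w"
  using coclosed_invs unfolding coclosed_def by blast

lemma atLeastAtMost_1_3: "{1..3::nat} = {1, 2, 3}"
  by auto

lemma atLeastAtMost_1_4: "{1..4::nat} = {1, 2, 3, 4}"
  by auto

lemma lower_star_231: "lower_star [2, 3, 1] = [2, 1, 3]"
proof (rule lower_star_eqI[where m = 3 and e = "(1, 3)"])
  fix w'
  assume w': "w' \<in> Sn 3" "invs w' \<subset> invs [2, 3, 1]"
  then show "(1, 3) \<notin> invs w'"
    using coclosed_invsD[OF w'(1), of 1 3 2] by (auto simp: invs_eq_set_inversion_list)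
qed (auto simp: Sn_def atLeastAtMost_1_3 invs_eq_set_inversion_list)

lemma lower_star_312: "lower_star [3, 1, 2] = [1, 3, 2]"
proof (rule lower_star_eqI[where m = 3 and e = "(1, 3)"])
  fix w'
  assume w': "w' \<in> Sn 3" "invs w' \<subset> invs [3, 1, 2]"
  then show "(1, 3) \<notin> invs w'"
    using coclosed_invsD[OF w'(1), of 1 3 2] by (auto simp: invs_eq_set_inversion_list)
qed (auto simp: Sn_def atLeastAtMost_1_3 invs_eq_set_inversion_list)

lemma lower_star_3412: "lower_star [3, 4, 1, 2] = [3, 1, 4, 2]"
proof (rule lower_star_eqI[where m = 4 and e = "(1, 4)"])
  fix w'
  assume w': "w' \<in> Sn 4" "invs w' \<subset> invs [3, 4, 1, 2]"
  show "(1, 4) \<notin> invs w'"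
  proof
    assume "(1, 4) \<in> invs w'"
    with w' have "(2, 4) \<in> invs w'" "(1, 3) \<in> invs w'"
      using coclosed_invsD[OF w'(1), of 1 4 2] coclosed_invsD[OF w'(1), of 1 4 3]
      by (auto simp: invs_eq_set_inversion_list)
    with w' have "(2, 3) \<in> invs w'"
      using coclosed_invsD[OF w'(1), of 2 4 3] by (auto simp: invs_eq_set_inversion_list)
    with w' \<open>(1, 4) \<in> invs w'\<close> \<open>(2, 4) \<in> invs w'\<close> \<open>(1, 3) \<in> invs w'\<close> show False
      by (auto simp: invs_eq_set_inversion_list)
  qed
qed (auto simp: Sn_def atLeastAtMost_1_4 invs_eq_set_inversion_list)

lemma lower_star_2413: "lower_star [2, 4, 1, 3] = [2, 1, 4, 3]"
proof (rule lower_star_eqI[where m = 4 and e = "(1, 4)"])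
  fix w'
  assume w': "w' \<in> Sn 4" "invs w' \<subset> invs [2, 4, 1, 3]"
  show "(1, 4) \<notin> invs w'"
  proof
    assume "(1, 4) \<in> invs w'"
    with w' have "(1, 2) \<in> invs w'" "(3, 4) \<in> invs w'"
      using coclosed_invsD[OF w'(1), of 1 4 2] coclosed_invsD[OF w'(1), of 1 4 3]
      by (auto simp: invs_eq_set_inversion_list)
    with w' \<open>(1, 4) \<in> invs w'\<close> show False
      by (auto simp: invs_eq_set_inversion_list)
  qed
qed (auto simp: Sn_def atLeastAtMost_1_4 invs_eq_set_inversion_list)

lemma contracts_of_contracts_231:
  assumes H: "H_family \<Theta>" and "\<forall>\<gamma>\<in>{[2, 3, 1]}. contracts \<Theta> \<gamma>"
  shows "\<forall>\<gamma>\<in>{[3, 4, 1, 2], [2, 4, 1, 3]}. contracts \<Theta> \<gamma>"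
proof -
  from assms(2) have c: "contracts \<Theta> [2, 3, 1]" by blast
  have st: "st [3, 4, 1] = [2, 3, 1]" "st [3, 1, 4] = [2, 1, 3]"
    "st [2, 4, 1] = [2, 3, 1]" "st [2, 1, 4] = [2, 1, 3]"
    by (rule st_eq_of_same_pattern[where n = 3]; auto simp: same_pattern_def)+
  have "([] @ [3, 4, 1] @ [2], [] @ [3, 1, 4] @ [2]) \<in> \<Theta> 4"
    by (rule H_family_contracts_infix[OF H c st(1) st(2)[folded lower_star_231]]) auto
  moreover have "([] @ [2, 4, 1] @ [3], [] @ [2, 1, 4] @ [3]) \<in> \<Theta> 4"
    by (rule H_family_contracts_infix[OF H c st(3) st(4)[folded lower_star_231]]) auto
  ultimately have "contracts \<Theta> [3, 4, 1, 2]" "contracts \<Theta> [2, 4, 1, 3]"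
    unfolding contracts_def lower_star_3412 lower_star_2413 by (simp_all add: numeral_eq_Suc)
  then show ?thesis by blast
qed

lemma contracts_of_contracts_312:
  assumes H: "H_family \<Theta>" and "\<forall>\<gamma>\<in>{[3, 1, 2]}. contracts \<Theta> \<gamma>"
  shows "\<forall>\<gamma>\<in>{[3, 4, 1, 2], [2, 4, 1, 3]}. contracts \<Theta> \<gamma>"
proof -
  from assms(2) have c: "contracts \<Theta> [3, 1, 2]" by blast
  have st: "st [4, 1, 2] = [3, 1, 2]" "st [1, 4, 2] = [1, 3, 2]"
    "st [4, 1, 3] = [3, 1, 2]" "st [1, 4, 3] = [1, 3, 2]"
    by (rule st_eq_of_same_pattern[where n = 3]; auto simp: same_pattern_def)+
  have "([3] @ [4, 1, 2] @ [], [3] @ [1, 4, 2] @ []) \<in> \<Theta> 4"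
    by (rule H_family_contracts_infix[OF H c st(1) st(2)[folded lower_star_312]]) auto
  moreover have "([2] @ [4, 1, 3] @ [], [2] @ [1, 4, 3] @ []) \<in> \<Theta> 4"
    by (rule H_family_contracts_infix[OF H c st(3) st(4)[folded lower_star_312]]) auto
  ultimately have "contracts \<Theta> [3, 4, 1, 2]" "contracts \<Theta> [2, 4, 1, 3]"
    unfolding contracts_def lower_star_3412 lower_star_2413 by (simp_all add: numeral_eq_Suc)
  then show ?thesis by blast
qed

section \<open>Baxter descents\<close>

lemma invs_swap:
  assumes d: "distinct (T @ [c, a] @ U)" and ac: "a < c"
  shows "invs (T @ [c, a] @ U) = insert (a, c) (invs (T @ [a, c] @ U))"
    and "(a, c) \<notin> invs (T @ [a, c] @ U)"
proof -
  have d': "distinct (T @ [a, c] @ U)" using d by auto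
  have "precedes (T @ [a, c] @ U) a c" by (simp add: precedes_append)
  then show "(a, c) \<notin> invs (T @ [a, c] @ U)"
    using precedes_asym[OF d'] by (simp add: mem_invs)
  have swap: "precedes (T @ [c, a] @ U) s t \<longleftrightarrow> precedes (T @ [a, c] @ U) s t \<or> (s = c \<and> t = a)"
    if "\<not> (s = a \<and> t = c)" for s t
    using that by (auto simp: precedes_append)
  show "invs (T @ [c, a] @ U) = insert (a, c) (invs (T @ [a, c] @ U))"
  proof (intro set_eqI)
    fix y :: "nat \<times> nat"
    obtain s t where y: "y = (s, t)" by (cases y)
    show "y \<in> invs (T @ [c, a] @ U) \<longleftrightarrow> y \<in> insert (a, c) (invs (T @ [a, c] @ U))"
    proof (cases "s < t")
      case True
      then have "\<not> (t = a \<and> s = c)" using ac by auto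
      then show ?thesis using y swap[of t s] True by (auto simp: mem_invs)
    next
      case False
      then show ?thesis using y ac by (auto simp: mem_invs)
    qed
  qed
qed

lemma syl_pairs_insert:
  assumes "(b, c) \<notin> I" "a < b" "b < c"
  shows "syl_pairs (insert (a, c) I) = syl_pairs I"
proof
  show "syl_pairs I \<subseteq> syl_pairs (insert (a, c) I)" by (rule syl_pairs_mono) blast
  show "syl_pairs (insert (a, c) I) \<subseteq> syl_pairs I"
  proof (clarify)
    fix s t
    assume st: "(s, t) \<in> syl_pairs (insert (a, c) I)"
    have "(b', t) \<in> I" if "s \<le> b'" "b' < t" for b'
    proof (rule ccontr)
      assume "(b', t) \<notin> I"
      with st that have "b' = a" "t = c" unfolding syl_pairs_def by auto
      moreover have "\<forall>b''. s \<le> b'' \<and> b'' < t \<longrightarrow> (b'', t) \<in> insert (a, c) I"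
        using st unfolding syl_pairs_def by blast
      moreover have "s \<le> b" using that assms \<open>b' = a\<close> by simp
      ultimately have "(b, c) \<in> insert (a, c) I" using assms(3) by blast
      with assms show False by auto
    qed
    with st show "(s, t) \<in> syl_pairs I" unfolding syl_pairs_def by auto
  qed
qed

lemma asyl_pairs_insert:
  assumes "(a, b) \<notin> I" "a < b" "b < c"
  shows "asyl_pairs (insert (a, c) I) = asyl_pairs I"
proof
  show "asyl_pairs I \<subseteq> asyl_pairs (insert (a, c) I)" by (rule asyl_pairs_mono) blast
  show "asyl_pairs (insert (a, c) I) \<subseteq> asyl_pairs I"
  proof (clarify)
    fix s t
    assume st: "(s, t) \<in> asyl_pairs (insert (a, c) I)"
    have "(s, b') \<in> I" if "s < b'" "b' \<le> t" for b'
    proof (rule ccontr)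
      assume "(s, b') \<notin> I"
      with st that have "s = a" "b' = c" unfolding asyl_pairs_def by auto
      moreover have "\<forall>b''. s < b'' \<and> b'' \<le> t \<longrightarrow> (s, b'') \<in> insert (a, c) I"
        using st unfolding asyl_pairs_def by blast
      moreover have "b \<le> t" using that assms \<open>b' = c\<close> by simp
      ultimately have "(a, b) \<in> insert (a, c) I" using assms(2) by blast
      with assms show False by auto
    qed
    with st show "(s, t) \<in> asyl_pairs I" unfolding asyl_pairs_def by auto
  qed
qed

lemma syl_pairs_swap:
  assumes d: "distinct (T @ [c, a] @ U)" and ac: "a < c" and b: "b \<in> set T" "a < b" "b < c"
  shows "syl_pairs (invs (T @ [c, a] @ U)) = syl_pairs (invs (T @ [a, c] @ U))"
proof -
  have "precedes (T @ [a, c] @ U) b c" using b by (simp add: precedes_append)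
  then have "(b, c) \<notin> invs (T @ [a, c] @ U)"
    using precedes_asym[of "T @ [a, c] @ U"] d by (auto simp: mem_invs)
  with b show ?thesis using invs_swap(1)[OF d ac] syl_pairs_insert by simp
qed

lemma asyl_pairs_swap:
  assumes d: "distinct (T @ [c, a] @ U)" and ac: "a < c" and b: "b \<in> set U" "a < b" "b < c"
  shows "asyl_pairs (invs (T @ [c, a] @ U)) = asyl_pairs (invs (T @ [a, c] @ U))"
proof -
  have "precedes (T @ [a, c] @ U) a b" using b by (simp add: precedes_append)
  then have "(a, b) \<notin> invs (T @ [a, c] @ U)"
    using precedes_asym[of "T @ [a, c] @ U"] d by (auto simp: mem_invs)
  with b show ?thesis using invs_swap(1)[OF d ac] asyl_pairs_insert by simp
qed

lemma contracts_sylvester_231: "contracts sylvester [2, 3, 1]"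
proof -
  have "syl_pairs (invs ([2] @ [3, 1] @ [])) = syl_pairs (invs ([2] @ [1, 3] @ []))"
    by (rule syl_pairs_swap[of _ _ _ _ 2]) auto
  then show ?thesis
    unfolding contracts_def lower_star_231 sylvester_def by (auto simp: Sn_def atLeastAtMost_1_3)
qed

lemma contracts_anti_sylvester_312: "contracts anti_sylvester [3, 1, 2]"
proof -
  have "asyl_pairs (invs ([] @ [3, 1] @ [2])) = asyl_pairs (invs ([] @ [1, 3] @ [2]))"
    by (rule asyl_pairs_swap[of _ _ _ _ 2]) auto
  then show ?thesis
    unfolding contracts_def lower_star_312 anti_sylvester_def by (auto simp: Sn_def atLeastAtMost_1_3)
qed

lemma sorted_list_of_set_Max:
  assumes "finite A" "A \<noteq> {}"
  shows "sorted_list_of_set A = sorted_list_of_set (A - {Max A}) @ [Max A]"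
proof -
  have "x < Max A" if "x \<in> A - {Max A}" for x
    using that Max_ge[OF assms(1)] by (simp add: le_neq_trans)
  then have "sorted_wrt (<) (sorted_list_of_set (A - {Max A}) @ [Max A])"
    using assms(1) by (simp add: sorted_wrt_append)
  moreover have "card A = Suc (card (A - {Max A}))"
    using assms card_Diff1_less Max_in by (simp add: card_gt_0_iff)
  ultimately show ?thesis
    using assms Max_in by (subst sorted_list_of_set_unique[symmetric]) auto
qed

lemma invs_sorted_descent_sorted:
  assumes sX: "sorted_wrt (<) xs" and sY: "sorted_wrt (<) ys"
    and bX: "\<forall>x\<in>set xs. x < c" and bY: "\<forall>y\<in>set ys. a < y" and ac: "a < c"
  shows "invs (xs @ [c, a] @ ys) =
    {(p, q). p < q \<and> (q = c \<or> q \<in> set xs) \<and> (p = a \<or> p \<in> set ys)}"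
proof (intro set_eqI)
  fix y :: "nat \<times> nat"
  obtain p q where y: "y = (p, q)" by (cases y)
  have "precedes (xs @ [c, a] @ ys) q p \<longleftrightarrow> (q \<in> set xs \<and> p \<in> set xs \<and> q < p) \<or> (q = c \<and> p = a) \<or>
      (q \<in> set ys \<and> p \<in> set ys \<and> q < p) \<or> (q \<in> {c, a} \<and> p \<in> set ys) \<or>
      (q \<in> set xs \<and> p \<in> {c, a} \<union> set ys)"
    using precedes_sorted[OF sX] precedes_sorted[OF sY] by (auto simp: precedes_append)
  with bX bY ac show "y \<in> invs (xs @ [c, a] @ ys) \<longleftrightarrow>
      y \<in> {(p, q). p < q \<and> (q = c \<or> q \<in> set xs) \<and> (p = a \<or> p \<in> set ys)}"
    unfolding y mem_invs by auto
qed

lemma lattice_congruence_by_join: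
  assumes "lattice_congruence n \<Theta>" "(j, j') \<in> \<Theta>" "x' \<in> Sn n"
    and "is_wjoin n j x' x" "is_wjoin n j' x' x'"
  shows "(x, x') \<in> \<Theta>"
  using assms wjoin_eq unfolding lattice_congruence_def by metis

lemma H_family_swap_in_pattern:
  assumes H: "H_family \<Theta>" and c: "contracts \<Theta> [3, 4, 1, 2]" "contracts \<Theta> [2, 4, 1, 3]"
    and x: "xs @ [l, c, a, r] @ ys \<in> Sn n"
    and lr: "a < l" "l < c" "a < r" "r < c" "l \<noteq> r"
  shows "(xs @ [l, c, a, r] @ ys, xs @ [l, a, c, r] @ ys) \<in> \<Theta> n"
proof -
  have d: "distinct (xs @ [l, c, a, r] @ ys)" and s: "set (xs @ [l, c, a, r] @ ys) = {1..n}"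
    using x by (simp_all add: Sn_def)
  consider "r < l" | "l < r" using lr(5) by linarith
  then show ?thesis
  proof cases
    case 1
    have "st [l, c, a, r] = [3, 4, 1, 2]" "st [l, a, c, r] = [3, 1, 4, 2]"
      using 1 lr by (auto intro!: st_eq_of_same_pattern[where n = 4] simp: same_pattern_def)
    then have "st [l, c, a, r] = [3, 4, 1, 2]" "st [l, a, c, r] = lower_star [3, 4, 1, 2]"
      by (simp_all only: lower_star_3412)
    with H c(1) d s show ?thesis by (intro H_family_contracts_infix) auto
  next
    case 2
    have "st [l, c, a, r] = [2, 4, 1, 3]" "st [l, a, c, r] = [2, 1, 4, 3]"
      using 2 lr by (auto intro!: st_eq_of_same_pattern[where n = 4] simp: same_pattern_def)
    then have "st [l, c, a, r] = [2, 4, 1, 3]" "st [l, a, c, r] = lower_star [2, 4, 1, 3]"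
      by (simp_all only: lower_star_2413)
    with H c(2) d s show ?thesis by (intro H_family_contracts_infix) auto
  qed
qed

lemma ex_pattern_below_baxter_descent:
  assumes x: "T @ [c, a] @ U \<in> Sn n" and ac: "a < c"
    and b: "b \<in> set T" "a < b" "b < c" and b': "b' \<in> set U" "a < b'" "b' < c"
  obtains X l r Y where "X @ [l, c, a, r] @ Y \<in> Sn n"
    and "a < l" "l < c" "a < r" "r < c" "l \<noteq> r"
    and "invs (X @ [l, c, a, r] @ Y) \<subseteq> invs (T @ [c, a] @ U)"
proof -
  let ?x = "T @ [c, a] @ U"
  have dx: "distinct ?x" and sx: "set ?x = {1..n}" using x by (simp_all add: Sn_def)
  define A where "A = {d \<in> set T. d < c} \<union> {d \<in> set U. d < a}"
  define B where "B = {d \<in> set T. c < d} \<union> {d \<in> set U. a < d}"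
  define l where "l = Max A"
  define r where "r = Min B"
  have fin: "finite A" "finite B" and "b \<in> A" "b' \<in> B"
    using b b' unfolding A_def B_def by auto
  then have "l \<in> A" "b \<le> l" "r \<in> B" "r \<le> b'"
    unfolding l_def r_def by (auto intro: Max_in Min_in)
  with b b' dx have lr: "a < l" "l < c" "a < r" "r < c" "l \<noteq> r"
    unfolding A_def B_def by auto
  let ?j = "sorted_list_of_set A @ [c, a] @ sorted_list_of_set B"
  have AB: "A \<inter> B = {}" "a \<notin> A \<union> B" "c \<notin> A \<union> B" "A \<union> B \<union> {a, c} = set ?x"
    using dx ac unfolding A_def B_def by auto
  have "distinct ?j" using AB fin ac by auto
  moreover have "set ?j = {1..n}" using AB fin sx by auto
  ultimately have j: "?j \<in> Sn n" by (simp add: Sn_def)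
  have "\<forall>d\<in>A. d < c" "\<forall>d\<in>B. a < d" using ac unfolding A_def B_def by auto
  then have inv_j: "invs ?j = {(p, q). p < q \<and> (q = c \<or> q \<in> A) \<and> (p = a \<or> p \<in> B)}"
    using invs_sorted_descent_sorted[of "sorted_list_of_set A" "sorted_list_of_set B" c a] fin ac
    by simp
  have jx: "invs ?j \<subseteq> invs ?x"
  proof
    fix y
    assume "y \<in> invs ?j"
    then obtain p q where y: "y = (p, q)" and pq: "p < q" "q = c \<or> q \<in> A" "p = a \<or> p \<in> B"
      using inv_j by auto
    from pq(2) have q: "q = c \<or> q \<in> set T \<and> q < c \<or> q \<in> set U \<and> q < a"
      unfolding A_def by blast
    from pq(3) have p: "p = a \<or> p \<in> set T \<and> c < p \<or> p \<in> set U \<and> a < p"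
      unfolding B_def by blast
    from q p pq(1) ac have "(q = c \<or> q \<in> set T) \<and> (p = a \<or> p \<in> set U)" by auto
    then have "precedes ?x q p" using ac by (auto simp: precedes_append)
    with pq(1) y show "y \<in> invs ?x" by (simp add: mem_invs)
  qed
  have "sorted_list_of_set A = sorted_list_of_set (A - {l}) @ [l]"
    "sorted_list_of_set B = r # sorted_list_of_set (B - {r})"
    using sorted_list_of_set_Max[of A] sorted_list_of_set_nonempty[of B] fin \<open>b \<in> A\<close> \<open>b' \<in> B\<close>
    unfolding l_def r_def by blast+
  then have "?j = sorted_list_of_set (A - {l}) @ [l, c, a, r] @ sorted_list_of_set (B - {r})"
    by simp
  with j jx lr show ?thesis using that by metis
qed

text \<open>The permutation is the join of the pattern witness below it with its own swap, and the
  witness is congruent to its swap.\<close>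
lemma H_family_baxter_swap:
  assumes H: "H_family \<Theta>" and c: "contracts \<Theta> [3, 4, 1, 2]" "contracts \<Theta> [2, 4, 1, 3]"
    and x: "T @ [c, a] @ U \<in> Sn n" and ac: "a < c"
    and b: "b \<in> set T" "a < b" "b < c" and b': "b' \<in> set U" "a < b'" "b' < c"
  shows "(T @ [c, a] @ U, T @ [a, c] @ U) \<in> \<Theta> n"
proof -
  let ?x = "T @ [c, a] @ U" and ?x' = "T @ [a, c] @ U"
  obtain X l r Y where j: "X @ [l, c, a, r] @ Y \<in> Sn n" and lr: "a < l" "l < c" "a < r" "r < c" "l \<noteq> r"
    and jx: "invs (X @ [l, c, a, r] @ Y) \<subseteq> invs ?x"
    using ex_pattern_below_baxter_descent[OF x ac b b'] .
  let ?j = "X @ [l, c, a, r] @ Y" and ?j' = "X @ [l, a, c, r] @ Y"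
  have x': "?x' \<in> Sn n" and j': "?j' \<in> Sn n" using x j by (auto simp: Sn_def)
  have "(?j, ?j') \<in> \<Theta> n"
    using H_family_swap_in_pattern[OF H c j lr] .
  moreover have "invs ?j = insert (a, c) (invs ?j')" "(a, c) \<notin> invs ?j'"
    "invs ?x = insert (a, c) (invs ?x')"
    using invs_swap[of "X @ [l]" c a "r # Y"] invs_swap(1)[of T c a U] Sn_distinct[OF j]
      Sn_distinct[OF x] ac by simp_all
  with jx have "is_wjoin n ?j ?x' ?x" "is_wjoin n ?j' ?x' ?x'"
    using x x' unfolding is_wjoin_def weak_le_def by auto
  ultimately show ?thesis
    using lattice_congruence_by_join H x' unfolding H_family_def by blast
qed

definition has_baxter_descent :: "nat list \<Rightarrow> bool" where
  "has_baxter_descent x \<longleftrightarrow> (\<exists>T c a U. x = T @ [c, a] @ U \<and> a < c \<and>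
     (\<exists>b\<in>set T. a < b \<and> b < c) \<and> (\<exists>b\<in>set U. a < b \<and> b < c))"

lemma ex_adjacent_descent:
  fixes a c c\<^sub>0 :: nat
  assumes "\<forall>e\<in>set M. e \<le> a \<or> c \<le> e" "c \<le> c\<^sub>0" "a < c"
  shows "\<exists>T c' a' U. c\<^sub>0 # M @ [a] = T @ [c', a'] @ U \<and> c \<le> c' \<and> a' \<le> a"
  using assms
proof (induction M arbitrary: c\<^sub>0)
  case Nil
  then show ?case by (intro exI[of _ "[]"]) auto
next
  case (Cons e M)
  show ?case
  proof (cases "c \<le> e")
    case True
    with Cons.IH[of e] Cons.prems obtain T c' a' U
      where "e # M @ [a] = T @ [c', a'] @ U" "c \<le> c'" "a' \<le> a" by auto
    then show ?thesis by (intro exI[of _ "c\<^sub>0 # T"]) auto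
  next
    case False
    with Cons.prems show ?thesis by (intro exI[of _ "[]"]) auto
  qed
qed

lemma has_baxter_descentI:
  assumes x: "x = T @ c # M @ a # U" and ac: "a < c" and M: "\<forall>e\<in>set M. e \<le> a \<or> c \<le> e"
    and b: "b \<in> set T" "a < b" "b < c" and b': "b' \<in> set U" "a < b'" "b' < c"
  shows "has_baxter_descent x"
proof -
  obtain T' c' a' U' where w: "c # M @ [a] = T' @ [c', a'] @ U'" "c \<le> c'" "a' \<le> a"
    using ex_adjacent_descent[OF M order_refl ac] by blast
  then have "x = (T @ T') @ [c', a'] @ (U' @ U)" using x by simp
  moreover have "a' < c'" using w ac by simp
  moreover have "b \<in> set (T @ T')" "b' \<in> set (U' @ U)" using b b' by auto
  moreover have "a' < b" "b < c'" "a' < b'" "b' < c'" using w b b' by linarith+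
  ultimately show ?thesis unfolding has_baxter_descent_def by blast
qed

lemma ex_precedes_if_not_syl_pair:
  assumes x: "x \<in> Sn n" and ac: "(a, c) \<in> invs x" "(a, c) \<notin> syl_pairs (invs x)"
  obtains b where "a < b" "b < c" "precedes x b c"
proof -
  obtain b where b: "a \<le> b" "b < c" "(b, c) \<notin> invs x"
    using ac unfolding syl_pairs_def by (auto simp: mem_invs)
  with ac(1) have "a < b" by (cases "a = b") auto
  have "a \<in> set x" "c \<in> set x" using mem_invsD[OF ac(1)] by auto
  with b \<open>a < b\<close> have "b \<in> set x" "\<not> precedes x c b"
    using Sn_set[OF x] by (auto simp: mem_invs)
  with b(2) \<open>c \<in> set x\<close> have "precedes x b c" using precedes_total[of b x c] by blast
  with \<open>a < b\<close> b(2) show ?thesis using that by blast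
qed

lemma ex_precedes_if_not_asyl_pair:
  assumes x: "x \<in> Sn n" and ac: "(a, c) \<in> invs x" "(a, c) \<notin> asyl_pairs (invs x)"
  obtains b where "a < b" "b < c" "precedes x a b"
proof -
  obtain b where b: "a < b" "b \<le> c" "(a, b) \<notin> invs x"
    using ac unfolding asyl_pairs_def by (auto simp: mem_invs)
  with ac(1) have "b < c" by (cases "b = c") auto
  have "a \<in> set x" "c \<in> set x" using mem_invsD[OF ac(1)] by auto
  with b \<open>b < c\<close> have "b \<in> set x" "\<not> precedes x b a"
    using Sn_set[OF x] by (auto simp: mem_invs)
  with b(1) \<open>a \<in> set x\<close> have "precedes x a b" using precedes_total[of a x b] by blast
  with \<open>b < c\<close> b(1) show ?thesis using that by blast
qed

text \<open>An inversion \<open>(a, c)\<close> that is neither kind of pair either splits at a value between \<open>a\<close>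
  and \<open>c\<close> lying between them in position, or the witnesses against both kinds of pair lie
  outside \<open>c \<dots> a\<close> and force a Baxter descent in between.\<close>
lemma invs_eq_trancl_syl_asyl_pairs:
  assumes x: "x \<in> Sn n" and nb: "\<not> has_baxter_descent x"
  shows "invs x = (syl_pairs (invs x) \<union> asyl_pairs (invs x))\<^sup>+"
proof
  let ?R = "syl_pairs (invs x) \<union> asyl_pairs (invs x)"
  have d: "distinct x" using Sn_distinct[OF x] .
  show "?R\<^sup>+ \<subseteq> invs x"
    by (rule trancl_subset_of_trans[OF _ trans_invs[OF d]]) (use syl_pairs_subset asyl_pairs_subset in blast)
  have "(a, c) \<in> ?R\<^sup>+" if "(a, c) \<in> invs x" for a c
    using that
  proof (induction "c - a" arbitrary: a c rule: less_induct)
    case less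
    have ac: "a < c" "precedes x c a" using less.prems by (auto simp: mem_invs)
    show ?case
    proof (cases "(a, c) \<in> ?R")
      case False
      obtain b where b: "a < b" "b < c" "precedes x b c"
        using ex_precedes_if_not_syl_pair[OF x less.prems] False by blast
      obtain b' where b': "a < b'" "b' < c" "precedes x a b'"
        using ex_precedes_if_not_asyl_pair[OF x less.prems] False by blast
      show ?thesis
      proof (cases "\<exists>e. a < e \<and> e < c \<and> precedes x c e \<and> precedes x e a")
        case True
        then obtain e where e: "a < e" "e < c" "precedes x c e" "precedes x e a" by blast
        have "(a, e) \<in> ?R\<^sup>+" using less.hyps[of e a] e by (simp add: mem_invs)
        moreover have "(e, c) \<in> ?R\<^sup>+" using less.hyps[of c e] e by (simp add: mem_invs)
        ultimately show ?thesis by (rule trancl_trans)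
      next
        case no_split: False
        obtain T M U where xd: "x = T @ c # M @ a # U" using precedes_split[OF ac(2)] by blast
        have "\<forall>e\<in>set M. e \<le> a \<or> c \<le> e"
        proof
          fix e
          assume "e \<in> set M"
          then have "precedes x c e" "precedes x e a" unfolding xd by (auto simp: precedes_append)
          with no_split show "e \<le> a \<or> c \<le> e" by auto
        qed
        moreover have "b \<in> set T" "b' \<in> set U"
          using b(3) b'(3) d unfolding xd by (auto simp: precedes_append dest: precedes_setD)
        ultimately have "has_baxter_descent x"
          using has_baxter_descentI[OF xd ac(1)] b b' by blast
        with nb show ?thesis by blast
      qed
    qed blast
  qed
  then show "invs x \<subseteq> ?R\<^sup>+" by auto
qed

lemma H_family_ex_no_baxter_descent:
  assumes H: "H_family \<Theta>" and c: "contracts \<Theta> [3, 4, 1, 2]" "contracts \<Theta> [2, 4, 1, 3]"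
    and x: "x \<in> Sn n"
  shows "\<exists>y\<in>Sn n. \<not> has_baxter_descent y \<and> (x, y) \<in> \<Theta> n \<and>
    syl_pairs (invs y) = syl_pairs (invs x) \<and> asyl_pairs (invs y) = asyl_pairs (invs x)"
  using x
proof (induction "card (invs x)" arbitrary: x rule: less_induct)
  case less
  show ?case
  proof (cases "has_baxter_descent x")
    case False
    with less.prems show ?thesis using H_family_refl[OF H] by blast
  next
    case True
    then obtain T c a U b b' where xd: "x = T @ [c, a] @ U" "a < c"
      and b: "b \<in> set T" "a < b" "b < c" and b': "b' \<in> set U" "a < b'" "b' < c"
      unfolding has_baxter_descent_def by blast
    let ?x' = "T @ [a, c] @ U"
    have d: "distinct (T @ [c, a] @ U)" using Sn_distinct[OF less.prems] xd by simp
    have x': "?x' \<in> Sn n" using less.prems xd by (auto simp: Sn_def)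
    have "(x, ?x') \<in> \<Theta> n" using H_family_baxter_swap[OF H c _ xd(2) b b'] less.prems xd by simp
    moreover have "syl_pairs (invs x) = syl_pairs (invs ?x')"
      "asyl_pairs (invs x) = asyl_pairs (invs ?x')"
      using syl_pairs_swap[OF d xd(2) b] asyl_pairs_swap[OF d xd(2) b'] xd by simp_all
    moreover have "card (invs ?x') < card (invs x)"
      using invs_swap[OF d xd(2)] finite_invs[OF x'] xd by simp
    then obtain y where "y \<in> Sn n" "\<not> has_baxter_descent y" "(?x', y) \<in> \<Theta> n"
      "syl_pairs (invs y) = syl_pairs (invs ?x')" "asyl_pairs (invs y) = asyl_pairs (invs ?x')"
      using less.hyps[OF _ x'] by blast
    moreover have "trans (\<Theta> n)" using H unfolding H_family_def lattice_congruence_def equiv_def by blast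
    ultimately show ?thesis by (metis transD)
  qed
qed

lemma sylvester_Int_anti_sylvester_subset:
  assumes H: "H_family \<Theta>" and "\<forall>\<gamma>\<in>{[3, 4, 1, 2], [2, 4, 1, 3]}. contracts \<Theta> \<gamma>"
  shows "sylvester n \<inter> anti_sylvester n \<subseteq> \<Theta> n"
proof (clarify)
  from assms(2) have c: "contracts \<Theta> [3, 4, 1, 2]" "contracts \<Theta> [2, 4, 1, 3]" by blast+
  fix x y
  assume "(x, y) \<in> sylvester n" "(x, y) \<in> anti_sylvester n"
  then have x: "x \<in> Sn n" and y: "y \<in> Sn n" and eq: "syl_pairs (invs x) = syl_pairs (invs y)"
    "asyl_pairs (invs x) = asyl_pairs (invs y)"
    unfolding sylvester_def anti_sylvester_def by auto
  obtain x\<^sub>0 where x\<^sub>0: "x\<^sub>0 \<in> Sn n" "\<not> has_baxter_descent x\<^sub>0" "(x, x\<^sub>0) \<in> \<Theta> n"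
    "syl_pairs (invs x\<^sub>0) = syl_pairs (invs x)" "asyl_pairs (invs x\<^sub>0) = asyl_pairs (invs x)"
    using H_family_ex_no_baxter_descent[OF H c x] by blast
  obtain y\<^sub>0 where y\<^sub>0: "y\<^sub>0 \<in> Sn n" "\<not> has_baxter_descent y\<^sub>0" "(y, y\<^sub>0) \<in> \<Theta> n"
    "syl_pairs (invs y\<^sub>0) = syl_pairs (invs y)" "asyl_pairs (invs y\<^sub>0) = asyl_pairs (invs y)"
    using H_family_ex_no_baxter_descent[OF H c y] by blast
  have "invs x\<^sub>0 = invs y\<^sub>0"
    using invs_eq_trancl_syl_asyl_pairs[OF x\<^sub>0(1,2)] invs_eq_trancl_syl_asyl_pairs[OF y\<^sub>0(1,2)]
      x\<^sub>0(4,5) y\<^sub>0(4,5) eq by simp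
  then have "x\<^sub>0 = y\<^sub>0" using invs_inject[OF x\<^sub>0(1) y\<^sub>0(1)] by blast
  moreover have "equiv (Sn n) (\<Theta> n)" using H unfolding H_family_def lattice_congruence_def by blast
  ultimately show "(x, y) \<in> \<Theta> n"
    using x\<^sub>0(3) y\<^sub>0(3) unfolding equiv_def by (metis symD transD)
qed

lemma Hcong_subset: "H_family \<Theta> \<Longrightarrow> \<forall>\<gamma>\<in>C. contracts \<Theta> \<gamma> \<Longrightarrow> Hcong C n \<subseteq> \<Theta> n"
  unfolding Hcong_def by blast

lemma subset_HcongI:
  "(\<And>\<Theta>. H_family \<Theta> \<Longrightarrow> \<forall>\<gamma>\<in>C. contracts \<Theta> \<gamma> \<Longrightarrow> R \<subseteq> \<Theta> n) \<Longrightarrow> R \<subseteq> Hcong C n"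
  unfolding Hcong_def by blast

lemma Hcong_antimono:
  "(\<And>\<Theta>. H_family \<Theta> \<Longrightarrow> \<forall>\<gamma>\<in>C. contracts \<Theta> \<gamma> \<Longrightarrow> \<forall>\<gamma>\<in>C'. contracts \<Theta> \<gamma>) \<Longrightarrow>
    Hcong C' n \<subseteq> Hcong C n"
  unfolding Hcong_def by blast

theorem proposition9p8:
  fixes n :: nat
  shows "Hcong {[3,4,1,2], [2,4,1,3]} n = Hcong {[2,3,1]} n \<inter> Hcong {[3,1,2]} n"
proof
  show "Hcong {[3,4,1,2], [2,4,1,3]} n \<subseteq> Hcong {[2,3,1]} n \<inter> Hcong {[3,1,2]} n"
    using Hcong_antimono[OF contracts_of_contracts_231] Hcong_antimono[OF contracts_of_contracts_312]
    by blast
  have "Hcong {[2,3,1]} n \<subseteq> sylvester n"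
    using Hcong_subset[OF H_family_sylvester] contracts_sylvester_231 by blast
  moreover have "Hcong {[3,1,2]} n \<subseteq> anti_sylvester n"
    using Hcong_subset[OF H_family_anti_sylvester] contracts_anti_sylvester_312 by blast
  ultimately have "Hcong {[2,3,1]} n \<inter> Hcong {[3,1,2]} n \<subseteq> sylvester n \<inter> anti_sylvester n"
    by blast
  also have "\<dots> \<subseteq> Hcong {[3,4,1,2], [2,4,1,3]} n"
    by (rule subset_HcongI[OF sylvester_Int_anti_sylvester_subset])
  finally show "Hcong {[2,3,1]} n \<inter> Hcong {[3,1,2]} n \<subseteq> Hcong {[3,4,1,2], [2,4,1,3]} n" .
qed

end
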